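(* Let $\phi^\sharp:\mathcal{O}(\mathbb{R}^{m|2n})\to\mathcal{O}(\mathbb{R}^{m|2n}_0)$ be $\phi^\sharp(f)=\sum_{j=0}^n\frac{(-1)^j\theta^{2j}}{j!}\left(\frac{\partial}{\partial r^2}\right)^jf$. Then, as operators on $\mathcal{O}(\mathbb{R}^{m|2n})$, for $1\le j\le m$ resp. $1\le j\le 2n$: $\phi^\sharp\circ x_j=x_j\sqrt{1-\frac{\theta^2}{r^2}}\,\phi^\sharp$, $\phi^\sharp\circ\grave{x}_j=\grave{x}_j\,\phi^\sharp$, $\phi^\sharp\circ\partial_{x_j}=\frac{1}{\sqrt{1-\theta^2/r^2}}\partial_{x_j}\phi^\sharp-\frac{x_j\theta^2}{r^3\sqrt{1-\theta^2/r^2}}\partial_r\phi^\sharp$, and $\phi^\sharp\circ\partial_{\grave{x}_j}=\partial_{\grave{x}_j}\phi^\sharp-\frac{\grave{x}^j}{r}\partial_r\phi^\sharp$.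
   Context: $\mathcal{O}(\mathbb{R}^{m|2n})=\mathcal{C}^\infty(\mathbb{R}^m)\otimes\Lambda_{2n}$, $\mathbb{R}^{m|2n}_0$ the same over $\mathbb{R}^m\setminus\{0\}$. $r=|\underline{x}|$, $\partial_r=\sum_i\frac{x_i}{r}\partial_{x_i}$, $\frac{\partial}{\partial r^2}=\frac1{2r}\partial_r$, acting coefficientwise on the Grassmann expansion. $\theta^2=-\sum_{k=1}^n\grave{x}_{2k-1}\grave{x}_{2k}$; $\sqrt{1-\theta^2/r^2}$ and its inverse are defined by finite Taylor expansion. $\grave{x}^{2k-1}=\frac12\grave{x}_{2k}$, $\grave{x}^{2k}=-\frac12\grave{x}_{2k-1}$. Multiplication by coordinates is understood as an operator. *)

theory Defs
  imports "HOL-Analysis.Analysis"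
begin

text \<open>Superfunctions on R^{m|2n}: a Grassmann expansion
  f = sum over A subseteq {1..2n} of f_A(x) x`_A, where x`_A is the ordered product
  of the odd generators with indices in A (increasing order).\<close>

type_synonym 'm sfun = "nat set \<Rightarrow> real^'m \<Rightarrow> real"

definition pd :: "'m::finite \<Rightarrow> (real^'m \<Rightarrow> real) \<Rightarrow> real^'m \<Rightarrow> real" where
  "pd j g x = deriv (\<lambda>t. g (x + t *\<^sub>R axis j 1)) 0"

definition smooth_fun :: "(real^'m::finite \<Rightarrow> real) \<Rightarrow> bool" where
  "smooth_fun g \<longleftrightarrow> (\<forall>js. (foldr pd js g) differentiable_on UNIV)"

definition superfun :: "nat \<Rightarrow> 'm::finite sfun \<Rightarrow> bool" where
  "superfun n f \<longleftrightarrow> (\<forall>A. (A \<subseteq> {1..2*n} \<longrightarrow> smooth_fun (f A))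
                        \<and> (\<not> A \<subseteq> {1..2*n} \<longrightarrow> f A = (\<lambda>x. 0)))"

text \<open>Sign of x`_A x`_B = ssign A B * x`_{A union B} for disjoint A, B.\<close>
definition ssign :: "nat set \<Rightarrow> nat set \<Rightarrow> real" where
  "ssign A B = (-1) ^ card {(a, b). a \<in> A \<and> b \<in> B \<and> b < a}"

definition smult :: "'m sfun \<Rightarrow> 'm sfun \<Rightarrow> 'm sfun" where
  "smult f g C x = (\<Sum>A\<in>Pow C. ssign A (C - A) * f A x * g (C - A) x)"

definition sone :: "'m sfun" where
  "sone A x = (if A = {} then 1 else 0)"

definition spow :: "'m sfun \<Rightarrow> nat \<Rightarrow> 'm sfun" where
  "spow f k = (smult f ^^ k) sone"

definition gen :: "nat \<Rightarrow> 'm sfun" where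
  "gen j A x = (if A = {j} then 1 else 0)"

definition theta2 :: "nat \<Rightarrow> 'm sfun" where
  "theta2 n A x = - (\<Sum>k=1..n. smult (gen (2*k-1)) (gen (2*k)) A x)"

text \<open>x`^{2k-1} = 1/2 x`_{2k},  x`^{2k} = -1/2 x`_{2k-1}.\<close>
definition gup :: "nat \<Rightarrow> 'm sfun" where
  "gup j A x = (if odd j then 1/2 * gen (j+1) A x else - 1/2 * gen (j-1) A x)"

definition sxmul :: "'m::finite \<Rightarrow> 'm sfun \<Rightarrow> 'm sfun" where
  "sxmul j f A x = x$j * f A x"

definition epd :: "'m::finite \<Rightarrow> 'm sfun \<Rightarrow> 'm sfun" where
  "epd j f A = pd j (f A)"

definition oder :: "nat \<Rightarrow> 'm sfun \<Rightarrow> 'm sfun" where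
  "oder j f B x = (if j \<in> B then 0 else (-1) ^ card {b\<in>B. b < j} * f (insert j B) x)"

definition dr :: "'m::finite sfun \<Rightarrow> 'm sfun" where
  "dr f A x = (\<Sum>i\<in>UNIV. x$i / norm x * pd i (f A) x)"

definition dr2 :: "'m::finite sfun \<Rightarrow> 'm sfun" where
  "dr2 f A x = 1 / (2 * norm x) * dr f A x"

text \<open>sqrt(1 - theta^2/r^2) and its inverse via finite Taylor expansion
  (theta^{2(n+1)} = 0).\<close>
definition sqrtfac :: "nat \<Rightarrow> 'm::finite sfun" where
  "sqrtfac n A x = (\<Sum>k=0..n. ((1/2::real) gchoose k) * (-1)^k / (norm x)^(2*k)
                       * spow (theta2 n) k A x)"

definition isqrtfac :: "nat \<Rightarrow> 'm::finite sfun" where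
  "isqrtfac n A x = (\<Sum>k=0..n. ((-1/2::real) gchoose k) * (-1)^k / (norm x)^(2*k)
                       * spow (theta2 n) k A x)"

definition phi :: "nat \<Rightarrow> 'm::finite sfun \<Rightarrow> 'm sfun" where
  "phi n f A x = (\<Sum>j=0..n. (-1)^j / fact j * smult (spow (theta2 n) j) ((dr2 ^^ j) f) A x)"

end

theory Submission
  imports Defs
begin

(* The operator phi = sum_j (-1)^j theta^{2j}/j! (d/dr^2)^j is the truncated Taylor
   expansion of the substitution r^2 -> r^2 - theta^2.  All four commutation rules follow
   from three structural facts about phi, proved coefficientwise on R^m minus the origin:
   (1) phi commutes with d/dr^2 and with Omega_j = r (d_j - 2 x_j d/dr^2), and with left
       multiplication by x-independent elements such as x`_j (these commute with d/dr^2,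
       and the even powers theta^{2k} are central);
   (2) a product rule: if u is a function with d/dr^2 u = alpha u / r^2 (homogeneous of
       degree 2 alpha), then phi (u f) = u (1 - theta^2/r^2)^alpha phi f, by the Leibniz
       formula for (d/dr^2)^k and a binomial resummation;
   (3) the odd derivative d/dx`_j is a derivation on the even-graded theta^{2k}, with
       d/dx`_j theta^2 = -2 x`^j.  For x_j take
   u = x_j (alpha = 1/2); for d_j split d_j = 2 x_j d/dr^2 + r^{-1} Omega_j and use
   u = 2 x_j and u = 1/r (alpha = -1/2). *)

definition ninv :: "nat set \<Rightarrow> nat set \<Rightarrow> nat" where
  "ninv A B = card {(a,b). a\<in>A \<and> b\<in>B \<and> b<a}"

lemma ssign_inv: "ssign A B = (-1)^ninv A B" by (simp add: ssign_def ninv_def)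

lemma finite_pairs: "finite A \<Longrightarrow> finite B \<Longrightarrow> finite {(a,b). a\<in>A \<and> b\<in>B \<and> (P a b)}"
  by (rule finite_subset[of _ "A\<times>B"]) auto

lemma ninv_Un_left:
  assumes "finite A" "finite B" "finite C" "A\<inter>B={}"
  shows "ninv (A\<union>B) C = ninv A C + ninv B C"
proof -
  have "{(a,b). a\<in>A\<union>B \<and> b\<in>C \<and> b<a} = {(a,b). a\<in>A \<and> b\<in>C \<and> b<a} \<union> {(a,b). a\<in>B \<and> b\<in>C \<and> b<a}" by auto
  then show ?thesis unfolding ninv_def using assms
    by (simp add: card_Un_disjoint finite_pairs disjoint_iff)
qed

lemma ninv_Un_right:
  assumes "finite A" "finite B" "finite C" "B\<inter>C={}"
  shows "ninv A (B\<union>C) = ninv A B + ninv A C"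
proof -
  have "{(a,b). a\<in>A \<and> b\<in>B\<union>C \<and> b<a} = {(a,b). a\<in>A \<and> b\<in>B \<and> b<a} \<union> {(a,b). a\<in>A \<and> b\<in>C \<and> b<a}" by auto
  then show ?thesis unfolding ninv_def using assms
    by (simp add: card_Un_disjoint finite_pairs disjoint_iff)
qed

(* Swapping two disjoint blocks inverts every pair exactly once. *)
lemma ninv_swap:
  assumes "finite A" "finite B" "A\<inter>B={}"
  shows "ninv A B + ninv B A = card A * card B"
proof -
  have e1: "{(b,a). b\<in>B \<and> a\<in>A \<and> a<b} = prod.swap ` {(a,b). a\<in>A \<and> b\<in>B \<and> a<b}" by auto
  have c1: "ninv B A = card {(a,b). a\<in>A \<and> b\<in>B \<and> a<b}"
    unfolding ninv_def e1 by (rule card_image) simp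
  have "A \<times> B = {(a,b). a\<in>A \<and> b\<in>B \<and> b<a} \<union> {(a,b). a\<in>A \<and> b\<in>B \<and> a<b}"
    using assms(3) by (auto simp: disjoint_iff) (metis linorder_neqE_nat)
  then have "card (A\<times>B) = ninv A B + card {(a,b). a\<in>A \<and> b\<in>B \<and> a<b}"
    unfolding ninv_def using assms by (simp add: card_Un_disjoint finite_pairs disjoint_iff)
  then show ?thesis using c1 by (simp add: card_cartesian_product)
qed

lemma ninv_single_left: "finite B \<Longrightarrow> ninv {j} B = card {b\<in>B. b<j}"
proof -
  have "{(a,b). a\<in>{j} \<and> b\<in>B \<and> b<a} = (\<lambda>b. (j,b)) ` {b\<in>B. b<j}" by auto
  then show "ninv {j} B = card {b\<in>B. b<j}" unfolding ninv_def
    by (simp add: card_image inj_on_def)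
qed

lemma ninv_single_right: "finite A \<Longrightarrow> ninv A {j} = card {a\<in>A. j<a}"
proof -
  have "{(a,b). a\<in>A \<and> b\<in>{j} \<and> b<a} = (\<lambda>a. (a,j)) ` {a\<in>A. j<a}" by auto
  then show ?thesis unfolding ninv_def
    by (simp add: card_image inj_on_def)
qed

(* Number of elements of X below j: the sign picked up by moving x`_j past x`_X. *)
definition nbelow :: "nat set \<Rightarrow> nat \<Rightarrow> nat" where "nbelow X j = card {b\<in>X. b<j}"

lemma nbelow_Un: "finite A \<Longrightarrow> finite B \<Longrightarrow> A \<inter> B = {} \<Longrightarrow> nbelow (A\<union>B) j = nbelow A j + nbelow B j"
proof -
  assume a: "finite A" "finite B" "A \<inter> B = {}"
  have "{b\<in>A\<union>B. b<j} = {b\<in>A. b<j} \<union> {b\<in>B. b<j}" by auto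
  then show ?thesis unfolding nbelow_def using a by (simp add: card_Un_disjoint disjoint_iff)
qed

lemma card_split: "finite A \<Longrightarrow> j \<notin> A \<Longrightarrow> card {a\<in>A. j<a} + nbelow A j = card A"
proof -
  assume a: "finite A" "j \<notin> A"
  have "A = {a\<in>A. j<a} \<union> {a\<in>A. a<j}" using a by auto (metis linorder_neqE_nat)
  then have "card A = card ({a\<in>A. j<a} \<union> {a\<in>A. a<j})" by simp
  also have "\<dots> = card {a\<in>A. j<a} + card {a\<in>A. a<j}" using a by (intro card_Un_disjoint) auto
  finally show ?thesis by (simp add: nbelow_def)
qed

lemma ninv_ins_left: "finite A \<Longrightarrow> finite R \<Longrightarrow> j \<notin> A \<Longrightarrow> ninv (insert j A) R = ninv A R + nbelow R j"
proof -
  assume a: "finite A" "finite R" "j \<notin> A"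
  have "ninv ({j} \<union> A) R = ninv {j} R + ninv A R" using a by (intro ninv_Un_left) auto
  then show ?thesis using ninv_single_left[OF a(2)] by (simp add: nbelow_def)
qed

lemma ninv_ins_right: "finite A \<Longrightarrow> finite R \<Longrightarrow> j \<notin> R \<Longrightarrow> ninv A (insert j R) = ninv A R + card {a\<in>A. j<a}"
proof -
  assume a: "finite A" "finite R" "j \<notin> R"
  have "ninv A (R \<union> {j}) = ninv A R + ninv A {j}" using a by (intro ninv_Un_right) auto
  then show ?thesis using ninv_single_right[OF a(1)] by simp
qed

lemma minus_one_pow: "(-1::real)^a = (if even a then 1 else -1)"
  by (simp add: minus_one_power_iff)

lemma minus_one_pow_parity: "even (a + b) \<Longrightarrow> (-1::real)^a = (-1)^b"
  by (auto simp: minus_one_pow)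

lemma smult_infinite: "infinite C \<Longrightarrow> smult f g C x = 0"
  by (simp add: smult_def)

(* The cocycle identity for ssign, which is the heart of associativity. *)
lemma sign_assoc:
  assumes "finite C" "A \<subseteq> C" "B \<subseteq> C - A"
  shows "ssign (A\<union>B) (C-(A\<union>B)) * ssign A B = ssign A (C-A) * ssign B (C-A-B)"
proof -
  define C' where "C' = C-A-B"
  have fA: "finite A" "finite B" "finite C'" using assms unfolding C'_def
    by (auto intro: finite_subset[of B C] finite_subset[of A C])
  have e: "C - (A\<union>B) = C'" unfolding C'_def by auto
  have e2: "C - A = B \<union> C'" using assms unfolding C'_def by auto
  have h1: "ninv (A\<union>B) C' = ninv A C' + ninv B C'"
    using fA assms by (intro ninv_Un_left) auto
  have h2: "ninv A (B \<union> C') = ninv A B + ninv A C'"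
    using fA unfolding C'_def by (intro ninv_Un_right) auto
  have l: "ssign (A\<union>B) C' * ssign A B = (-1)^(ninv A B + ninv A C' + ninv B C')"
    unfolding ssign_inv h1 by (simp add: power_add[symmetric] algebra_simps)
  have r: "ssign A (B \<union> C') * ssign B C' = (-1)^(ninv A B + ninv A C' + ninv B C')"
    unfolding ssign_inv h2 by (simp add: power_add[symmetric] algebra_simps)
  have e4: "B \<union> C' - B = C'" using assms unfolding C'_def by auto
  show ?thesis using l r unfolding e e2 e4 by simp
qed

lemma assoc_term:
  assumes "finite C" "D \<subseteq> C" "A \<subseteq> D"
  shows "ssign A (C - A) * (ssign (D - A) (C - A - (D - A)) * h (C - A - (D - A)) x)
       = ssign D (C - D) * (ssign A (D - A) * h (C - D) x)"
proof -
  have e1: "C - A - (D - A) = C - D" using assms by auto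
  have "ssign (A\<union>(D-A)) (C-(A\<union>(D-A))) * ssign A (D-A) = ssign A (C-A) * ssign (D-A) (C-A-(D-A))"
    using assms by (intro sign_assoc) auto
  moreover have "A \<union> (D-A) = D" using assms by auto
  ultimately show ?thesis unfolding e1 by (simp add: algebra_simps)
qed

lemma smult_assoc: "smult (smult f g) h C x = smult f (smult g h) C x"
proof (cases "finite C")
  case False then show ?thesis by (simp add: smult_infinite)
next
  case True
  have L: "smult (smult f g) h C x = (\<Sum>(D,A)\<in>Sigma (Pow C) Pow.
     ssign D (C - D) * ssign A (D - A) * f A x * g (D - A) x * h (C - D) x)"
    unfolding smult_def using True
    by (subst sum.Sigma[symmetric]) (auto simp: sum_distrib_left sum_distrib_right algebra_simps intro: finite_subset intro!: sum.cong)
  have R: "smult f (smult g h) C x = (\<Sum>(A,B)\<in>Sigma (Pow C) (\<lambda>A. Pow (C-A)).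
     ssign A (C - A) * ssign B (C - A - B) * f A x * g B x * h (C - A - B) x)"
    unfolding smult_def using True
    by (subst sum.Sigma[symmetric]) (auto simp: sum_distrib_left sum_distrib_right algebra_simps intro!: sum.cong)
  show ?thesis unfolding L R
    apply (rule sum.reindex_bij_witness[where i="\<lambda>(A,B). (A\<union>B, A)" and j="\<lambda>(D,A). (A, D-A)"])
    using True by (auto simp: assoc_term)
qed

lemma ssign_empty1[simp]: "ssign {} B = 1" by (simp add: ssign_def)

lemma ssign_empty2[simp]: "ssign A {} = 1" by (simp add: ssign_def)

(* Linearity of the product, stated pointwise so that it applies to coefficient expressions. *)
lemma smult_cong_l: "(\<And>C. F C x = F' C x) \<Longrightarrow> smult F G C x = smult F' G C x"
  by (simp add: smult_def)

lemma smult_cong_r: "(\<And>C. G C x = G' C x) \<Longrightarrow> smult F G C x = smult F G' C x"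
  by (simp add: smult_def)

lemma smult_sum_r: "(\<And>C. G C x = (\<Sum>k\<in>K. a k * H k C x)) \<Longrightarrow>
   smult F G C x = (\<Sum>k\<in>K. a k * smult F (H k) C x)"
  unfolding smult_def by (simp add: sum_distrib_left sum_distrib_right algebra_simps sum.swap[of _ K])

lemma smult_sum_l: "(\<And>C. F C x = (\<Sum>k\<in>K. a k * H k C x)) \<Longrightarrow>
   smult F G C x = (\<Sum>k\<in>K. a k * smult (H k) G C x)"
  unfolding smult_def by (simp add: sum_distrib_left sum_distrib_right algebra_simps sum.swap[of _ K])

lemma smult_scal_r: "(\<And>C. G C x = c * H C x) \<Longrightarrow> smult F G C x = c * smult F H C x"
  unfolding smult_def by (simp add: sum_distrib_left algebra_simps)

lemma smult_scal_l: "(\<And>C. F C x = c * H C x) \<Longrightarrow> smult F G C x = c * smult H G C x"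
  unfolding smult_def by (simp add: sum_distrib_left algebra_simps)

lemma smult_diff_r: assumes h: "\<And>C. G C x = G1 C x - G2 C x" shows "smult F G C x = smult F G1 C x - smult F G2 C x"
  unfolding smult_def h by (simp add: sum_subtractf[symmetric] algebra_simps)

lemma smult_diff_l: "smult (\<lambda>C y. F C y - G C y) H B x = smult F H B x - smult G H B x"
  unfolding smult_def by (simp add: sum_subtractf[symmetric] algebra_simps)

lemma smult_zero_r: "(\<And>C. G C x = 0) \<Longrightarrow> smult F G C x = 0"
  unfolding smult_def by simp

lemma smult_zero_l: "(\<And>C. F C x = 0) \<Longrightarrow> smult F G C x = 0"
  unfolding smult_def by simp

definition finsupp :: "'m sfun \<Rightarrow> bool" where
  "finsupp F \<longleftrightarrow> (\<forall>C x. infinite C \<longrightarrow> F C x = 0)"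

lemma sone_smult: "finsupp G \<Longrightarrow> smult sone G C x = G C x"
proof (cases "finite C")
  case True
  have "smult sone G C x = (\<Sum>A\<in>Pow C. if A = {} then G C x else 0)"
    unfolding smult_def sone_def by (intro sum.cong) auto
  also have "\<dots> = G C x" using True by (subst sum.delta) auto
  finally show ?thesis .
qed (auto simp: finsupp_def smult_infinite)

text \<open>Elements of even degree are central,
  and theta^{2k} has degree 2k, so it vanishes for k > n.\<close>

definition graded :: "'m sfun \<Rightarrow> nat \<Rightarrow> nat set \<Rightarrow> bool" where
  "graded F a S \<longleftrightarrow> (\<forall>C x. F C x \<noteq> 0 \<longrightarrow> finite C \<and> card C = a \<and> C \<subseteq> S)"

lemma graded_smult:
  assumes "graded F a S" "graded G b S"
  shows "graded (smult F G) (a+b) S"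
  unfolding graded_def
proof (intro allI impI)
  fix C x assume ne: "smult F G C x \<noteq> 0"
  then have fC: "finite C" using smult_infinite by blast
  from ne obtain A where A: "A \<in> Pow C" "ssign A (C-A) * F A x * G (C-A) x \<noteq> 0"
    unfolding smult_def by (meson sum.neutral)
  then have "F A x \<noteq> 0" "G (C-A) x \<noteq> 0" by auto
  then have "card A = a" "card (C-A) = b" "A \<subseteq> S" "C - A \<subseteq> S" using assms unfolding graded_def by auto
  moreover have "card C = card A + card (C-A)" using A fC
    by (metis Diff_partition Diff_disjoint PowD card_Un_disjoint finite_Diff finite_subset)
  ultimately show "finite C \<and> card C = a + b \<and> C \<subseteq> S" using fC by auto
qed

lemma graded_sone: "graded sone 0 S" unfolding graded_def sone_def by auto

lemma graded_gen: "j \<in> S \<Longrightarrow> graded (gen j) 1 S" unfolding graded_def gen_def by auto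

lemma graded_sum: "(\<And>k. k\<in>K \<Longrightarrow> graded (F k) a S) \<Longrightarrow> graded (\<lambda>C x. \<Sum>k\<in>K. c k * F k C x) a S"
  unfolding graded_def by (metis (mono_tags, lifting) mult_zero_right sum.neutral)

lemma graded_theta2: "graded (theta2 n) 2 {1..2*n}"
proof -
  have "graded (\<lambda>C x. \<Sum>k\<in>{1..n}. (-1) * smult (gen (2*k-1)) (gen (2*k)) C x) (1+1) {1..2*n}"
    by (intro graded_sum graded_smult graded_gen) auto
  then show ?thesis unfolding theta2_def one_add_one by (simp add: sum_negf)
qed

lemma spow_Suc: "spow F (Suc k) = smult F (spow F k)" by (simp add: spow_def)

lemma spow_0: "spow F 0 = sone" by (simp add: spow_def)

lemma graded_spow: "graded F a S \<Longrightarrow> graded (spow F k) (a*k) S"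
proof (induction k)
  case 0 then show ?case by (simp add: spow_0 graded_sone)
next
  case (Suc k)
  show ?case unfolding spow_Suc using graded_smult[OF Suc.prems Suc.IH[OF Suc.prems]] by simp
qed

lemma graded_theta2_pow: "graded (spow (theta2 n) k) (2*k) {1..2*n}"
  by (rule graded_spow[OF graded_theta2])

lemma graded_zero: "graded F a S \<Longrightarrow> finite S \<Longrightarrow> card S < a \<Longrightarrow> F C x = 0"
  unfolding graded_def using card_mono leD by metis

lemma spow_vanish: "n < k \<Longrightarrow> spow (theta2 n) k C x = 0"
  by (rule graded_zero[OF graded_theta2_pow]) auto

lemma smult_comm:
  assumes "graded F a S" "even a"
  shows "smult F G C x = smult G F C x"
proof (cases "finite C")
  case True
  show ?thesis unfolding smult_def
  proof (rule sum.reindex_bij_witness[where i="\<lambda>A. C - A" and j="\<lambda>A. C - A"])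
    fix A assume A: "A \<in> Pow C"
    show "C - (C - A) = A" "C - A \<in> Pow C" using A by auto
    have cc: "C - (C - A) = A" using A by auto
    show "ssign (C - A) (C - (C - A)) * G (C - A) x * F (C - (C - A)) x = ssign A (C - A) * F A x * G (C - A) x"
    proof (cases "F A x = 0")
      case False
      then have ev: "even (card A)" using assms unfolding graded_def by auto
      have fin: "finite A" "finite (C-A)" using A True finite_subset by auto
      have "ninv A (C-A) + ninv (C-A) A = card A * card (C-A)" using fin by (intro ninv_swap) auto
      then have "ssign (C-A) A = ssign A (C-A)" unfolding ssign_inv using ev
        by (intro minus_one_pow_parity) (metis add.commute even_add even_mult_iff)
      moreover have "C - (C - A) = A" using A by auto
      ultimately show ?thesis by simp
    qed (simp add: cc)
  qed auto
qed (simp add: smult_infinite)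

lemma finsupp_spow: "finsupp (spow F k)"
  by (cases k) (auto simp: finsupp_def spow_0 sone_def spow_Suc smult_infinite)

lemma spow_add: "smult (spow F a) (spow F b) C x = spow F (a+b) C x"
proof (induction a arbitrary: C)
  case 0 then show ?case by (simp add: spow_0 sone_smult finsupp_spow)
next
  case (Suc a)
  have "smult (spow F (Suc a)) (spow F b) C x = smult F (smult (spow F a) (spow F b)) C x"
    unfolding spow_Suc by (rule smult_assoc)
  also have "\<dots> = smult F (spow F (a+b)) C x"
    by (rule smult_cong_r) (rule Suc.IH)
  finally show ?case by (simp add: spow_Suc)
qed

lemma oder_eq: "oder j f B x = (if j \<in> B then 0 else (-1)^nbelow B j * f (insert j B) x)"
  by (simp add: oder_def nbelow_def)

lemma sum_Pow_insert: "finite B \<Longrightarrow> j \<notin> B \<Longrightarrow>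
   (\<Sum>A\<in>Pow (insert j B). h A) = (\<Sum>A\<in>Pow B. h A) + (\<Sum>A\<in>Pow B. h (insert j A))"
proof -
  assume a: "finite B" "j \<notin> B"
  have "(\<Sum>A\<in>Pow (insert j B). h A) = (\<Sum>A\<in>Pow B \<union> insert j ` Pow B. h A)" by (simp add: Pow_insert)
  also have "\<dots> = (\<Sum>A\<in>Pow B. h A) + (\<Sum>A\<in>insert j ` Pow B. h A)"
    using a by (intro sum.union_disjoint) auto
  also have "(\<Sum>A\<in>insert j ` Pow B. h A) = (\<Sum>A\<in>Pow B. h (insert j A))"
  proof (rule sum.reindex[unfolded comp_def])
    show "inj_on (insert j) (Pow B)" using a unfolding inj_on_def
      by (metis PowD Set.set_insert insert_ident subsetD)
  qed
  finally show ?thesis .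
qed

(* Sign bookkeeping for the three ways x`_j can be distributed over a product. *)
lemma sign_oder_left:
  assumes "finite B" "j \<notin> B" "A \<subseteq> B"
  shows "(-1::real)^nbelow B j * ssign (insert j A) (B - A) = ssign A (B-A) * (-1)^nbelow A j"
proof -
  have f: "finite A" "finite (B-A)" using assms finite_subset by auto
  have e1: "ninv (insert j A) (B-A) = ninv A (B-A) + nbelow (B-A) j"
    using f assms by (intro ninv_ins_left) auto
  have e2: "nbelow B j = nbelow A j + nbelow (B-A) j"
    using nbelow_Un[OF f, of j] assms by (simp add: Un_absorb1 Un_Diff_cancel)
  show ?thesis unfolding ssign_inv e1 e2 power_add[symmetric]
    by (rule minus_one_pow_parity) (simp; blast)
qed

lemma sign_oder_right:
  assumes "finite B" "j \<notin> B" "A \<subseteq> B" "even (card A)"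
  shows "(-1::real)^nbelow B j * ssign A (insert j (B - A)) = ssign A (B-A) * (-1)^nbelow (B-A) j"
proof -
  have f: "finite A" "finite (B-A)" using assms finite_subset by auto
  have e1: "ninv A (insert j (B-A)) = ninv A (B-A) + card {a\<in>A. j<a}"
    using f assms by (intro ninv_ins_right) auto
  have e2: "nbelow B j = nbelow A j + nbelow (B-A) j"
    using nbelow_Un[OF f, of j] assms by (simp add: Un_absorb1 Un_Diff_cancel)
  have e3: "card {a\<in>A. j<a} + nbelow A j = card A" using f assms by (intro card_split) auto
  show ?thesis unfolding ssign_inv e1 e2 power_add[symmetric]
    by (rule minus_one_pow_parity) (use e3 assms(4) in presburger)
qed

lemma sign_oder_cancel:
  assumes "finite B0" "j \<notin> B0" "A \<subseteq> B0" "odd (card A)"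
  shows "ssign A (insert j (B0 - A)) * (-1::real)^nbelow A j + ssign (insert j A) (B0 - A) * (-1)^nbelow (B0 - A) j = 0"
proof -
  have f: "finite A" "finite (B0-A)" using assms finite_subset by auto
  have e1: "ninv A (insert j (B0-A)) = ninv A (B0-A) + card {a\<in>A. j<a}"
    using f assms by (intro ninv_ins_right) auto
  have e2: "ninv (insert j A) (B0-A) = ninv A (B0-A) + nbelow (B0-A) j"
    using f assms by (intro ninv_ins_left) auto
  have e3: "card {a\<in>A. j<a} + nbelow A j = card A" using f assms by (intro card_split) auto
  have "(-1::real)^(ninv A (B0-A) + card {a\<in>A. j<a} + nbelow A j) = - ((-1)^(ninv A (B0-A) + nbelow (B0-A) j + nbelow (B0-A) j))"
    unfolding minus_one_pow using e3 assms(4) by auto presburger+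
  then show ?thesis unfolding ssign_inv e1 e2 power_add[symmetric] by (simp add: add.assoc)
qed

lemma oder_smult_notin:
  assumes sF: "graded F a S" and ev: "even a" and fB: "finite B" and jB: "j \<notin> B"
  shows "oder j (smult F G) B x = smult (oder j F) G B x + smult F (oder j G) B x"
proof -
  have L: "oder j (smult F G) B x = (-1)^nbelow B j *
     ((\<Sum>A\<in>Pow B. ssign A (insert j B - A) * F A x * G (insert j B - A) x)
     + (\<Sum>A\<in>Pow B. ssign (insert j A) (insert j B - insert j A) * F (insert j A) x * G (insert j B - insert j A) x))"
    using jB fB by (simp add: oder_eq smult_def sum_Pow_insert)
  have R1: "smult (oder j F) G B x = (\<Sum>A\<in>Pow B. (-1)^nbelow B j * (ssign (insert j A) (insert j B - insert j A) * F (insert j A) x * G (insert j B - insert j A) x))"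
    unfolding smult_def
  proof (rule sum.cong[OF refl])
    fix A assume A: "A \<in> Pow B"
    then have jA: "j \<notin> A" using jB by auto
    have e: "insert j B - insert j A = B - A" using jB by auto
    show "ssign A (B - A) * oder j F A x * G (B - A) x = (-1)^nbelow B j * (ssign (insert j A) (insert j B - insert j A) * F (insert j A) x * G (insert j B - insert j A) x)"
      unfolding e using sign_oder_left[OF fB jB, of A] A jA by (simp add: oder_eq algebra_simps)
  qed
  have R2: "smult F (oder j G) B x = (\<Sum>A\<in>Pow B. (-1)^nbelow B j * (ssign A (insert j B - A) * F A x * G (insert j B - A) x))"
    unfolding smult_def
  proof (rule sum.cong[OF refl])
    fix A assume A: "A \<in> Pow B"
    have e: "insert j B - A = insert j (B - A)" using jB A by auto
    show "ssign A (B - A) * F A x * oder j G (B - A) x = (-1)^nbelow B j * (ssign A (insert j B - A) * F A x * G (insert j B - A) x)"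
    proof (cases "F A x = 0")
      case False
      then have "even (card A)" using sF ev unfolding graded_def by auto
      then show ?thesis unfolding e using sign_oder_right[OF fB jB, of A] A jB by (simp add: oder_eq algebra_simps)
    qed simp
  qed
  show ?thesis unfolding L R1 R2 by (simp add: sum_distrib_left algebra_simps)
qed

lemma smult_oder_left_in:
  fixes F G :: "'m sfun"
  assumes B: "B = insert j B0" "j \<notin> B0" "finite B0"
  shows "smult (oder j F) G B x = (\<Sum>A\<in>Pow B0. ssign A (insert j (B0 - A)) * (-1)^nbelow A j * F (insert j A) x * G (insert j (B0 - A)) x)"
proof -
  have "smult (oder j F) G B x = (\<Sum>A\<in>Pow B0. ssign A (B - A) * oder j F A x * G (B - A) x)
     + (\<Sum>A\<in>Pow B0. ssign (insert j A) (B - insert j A) * oder j F (insert j A) x * G (B - insert j A) x)"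
    unfolding smult_def by (subst B(1), subst sum_Pow_insert[OF B(3,2)], simp add: B(1)[symmetric])
  also have "\<dots> = (\<Sum>A\<in>Pow B0. ssign A (B - A) * oder j F A x * G (B - A) x)"
    by (simp add: oder_eq)
  also have "\<dots> = (\<Sum>A\<in>Pow B0. ssign A (insert j (B0 - A)) * (-1)^nbelow A j * F (insert j A) x * G (insert j (B0 - A)) x)"
  proof (rule sum.cong[OF refl])
    fix A assume A: "A \<in> Pow B0"
    have "B - A = insert j (B0 - A)" "j \<notin> A" using A B by auto
    then show "ssign A (B - A) * oder j F A x * G (B - A) x = ssign A (insert j (B0 - A)) * (-1)^nbelow A j * F (insert j A) x * G (insert j (B0 - A)) x"
      by (simp add: oder_eq)
  qed
  finally show ?thesis .
qed

lemma smult_oder_right_in: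
  fixes F G :: "'m sfun"
  assumes B: "B = insert j B0" "j \<notin> B0" "finite B0"
  shows "smult F (oder j G) B x = (\<Sum>A\<in>Pow B0. ssign (insert j A) (B0 - A) * (-1)^nbelow (B0 - A) j * F (insert j A) x * G (insert j (B0 - A)) x)"
proof -
  have "smult F (oder j G) B x = (\<Sum>A\<in>Pow B0. ssign A (B - A) * F A x * oder j G (B - A) x)
     + (\<Sum>A\<in>Pow B0. ssign (insert j A) (B - insert j A) * F (insert j A) x * oder j G (B - insert j A) x)"
    unfolding smult_def by (subst B(1), subst sum_Pow_insert[OF B(3,2)], simp add: B(1)[symmetric])
  also have "(\<Sum>A\<in>Pow B0. ssign A (B - A) * F A x * oder j G (B - A) x) = 0"
    using B by (intro sum.neutral) (auto simp: oder_eq)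
  also have "(\<Sum>A\<in>Pow B0. ssign (insert j A) (B - insert j A) * F (insert j A) x * oder j G (B - insert j A) x)
      = (\<Sum>A\<in>Pow B0. ssign (insert j A) (B0 - A) * (-1)^nbelow (B0 - A) j * F (insert j A) x * G (insert j (B0 - A)) x)"
  proof (rule sum.cong[OF refl])
    fix A assume A: "A \<in> Pow B0"
    have "B - insert j A = B0 - A" "j \<notin> B0 - A" using A B by auto
    then show "ssign (insert j A) (B - insert j A) * F (insert j A) x * oder j G (B - insert j A) x = ssign (insert j A) (B0 - A) * (-1)^nbelow (B0 - A) j * F (insert j A) x * G (insert j (B0 - A)) x"
      using B(2) by (simp add: oder_eq)
  qed
  finally show ?thesis by simp
qed

lemma oder_smult_in:
  assumes sF: "graded F a S" and ev: "even a" and fB: "finite B" and jB: "j \<in> B"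
  shows "smult (oder j F) G B x + smult F (oder j G) B x = 0"
proof -
  define B0 where "B0 = B - {j}"
  have B: "B = insert j B0" "j \<notin> B0" "finite B0" using jB fB unfolding B0_def by auto
  have R1: "smult (oder j F) G B x = (\<Sum>A\<in>Pow B0. ssign A (insert j (B0 - A)) * (-1)^nbelow A j * F (insert j A) x * G (insert j (B0 - A)) x)"
    by (rule smult_oder_left_in[OF B])
  have R2: "smult F (oder j G) B x = (\<Sum>A\<in>Pow B0. ssign (insert j A) (B0 - A) * (-1)^nbelow (B0 - A) j * F (insert j A) x * G (insert j (B0 - A)) x)"
    by (rule smult_oder_right_in[OF B])
  have "smult (oder j F) G B x + smult F (oder j G) B x =
     (\<Sum>A\<in>Pow B0. (ssign A (insert j (B0 - A)) * (-1)^nbelow A j + ssign (insert j A) (B0 - A) * (-1)^nbelow (B0 - A) j) * F (insert j A) x * G (insert j (B0 - A)) x)"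
    unfolding R1 R2 sum.distrib[symmetric] by (intro sum.cong) (auto simp: algebra_simps)
  also have "\<dots> = 0"
  proof (rule sum.neutral, rule ballI)
    fix A assume A: "A \<in> Pow B0"
    show "(ssign A (insert j (B0 - A)) * (-1)^nbelow A j + ssign (insert j A) (B0 - A) * (-1)^nbelow (B0 - A) j) * F (insert j A) x * G (insert j (B0 - A)) x = 0"
    proof (cases "F (insert j A) x = 0")
      case False
      then have "even (card (insert j A))" "finite A" using sF ev unfolding graded_def by auto
      moreover have "j \<notin> A" using A B by auto
      ultimately have "odd (card A)" by simp
      then show ?thesis using sign_oder_cancel[OF B(3,2), of A] A by simp
    qed simp
  qed
  finally show ?thesis .
qed

lemma oder_smult:
  assumes sF: "graded F a S" and ev: "even a"
  shows "oder j (smult F G) B x = smult (oder j F) G B x + smult F (oder j G) B x"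
proof (cases "finite B")
  case False then show ?thesis by (simp add: oder_eq smult_infinite)
next
  case True
  then show ?thesis
    using oder_smult_notin[OF sF ev True] oder_smult_in[OF sF ev True] by (cases "j \<in> B") (simp_all add: oder_eq)
qed

lemma oder_spow:
  assumes T: "graded T a S" and ev: "even a"
  shows "oder j (spow T (Suc k)) B x = real (Suc k) * smult (oder j T) (spow T k) B x"
proof (induction k arbitrary: B)
  case 0
  have "oder j (spow T (Suc 0)) B x = smult (oder j T) sone B x + smult T (oder j sone) B x"
    unfolding spow_Suc spow_0 by (rule oder_smult[OF T ev])
  also have "smult T (oder j sone) B x = 0" by (rule smult_zero_r) (simp add: oder_eq sone_def)
  finally show ?case by (simp add: spow_0)
next
  case (Suc k)
  let ?Q = "oder j T"
  have "oder j (spow T (Suc (Suc k))) B x = smult ?Q (spow T (Suc k)) B x + smult T (oder j (spow T (Suc k))) B x"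
    unfolding spow_Suc[of _ "Suc k"] by (rule oder_smult[OF T ev])
  also have "smult T (oder j (spow T (Suc k))) B x = real (Suc k) * smult T (smult ?Q (spow T k)) B x"
    by (rule smult_scal_r) (rule Suc.IH)
  also have "smult T (smult ?Q (spow T k)) B x = smult (smult T ?Q) (spow T k) B x"
    by (rule smult_assoc[symmetric])
  also have "\<dots> = smult (smult ?Q T) (spow T k) B x"
    by (rule smult_cong_l) (rule smult_comm[OF T ev])
  also have "\<dots> = smult ?Q (spow T (Suc k)) B x" unfolding spow_Suc by (rule smult_assoc)
  finally show ?case by (simp add: algebra_simps)
qed

lemma smult_gen_gen: "a < b \<Longrightarrow> smult (gen a) (gen b) C x = (if C = {a,b} then 1 else 0)"
proof (cases "finite C")
  case True
  assume ab: "a < b"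
  have "smult (gen a) (gen b) C x = (\<Sum>A\<in>Pow C. if A = {a} then (if C - {a} = {b} then ssign {a} {b} else 0) else 0)"
    unfolding smult_def gen_def by (intro sum.cong) auto
  also have "\<dots> = (if {a} \<subseteq> C \<and> C - {a} = {b} then ssign {a} {b} else 0)"
    using True by (subst sum.delta) auto
  also have "ssign {a} {b} = 1"
  proof -
    have e: "{(aa,ba). aa = a \<and> ba = b \<and> ba < aa} = {}" using ab by auto
    show ?thesis by (simp add: ssign_def e)
  qed
  also have "({a} \<subseteq> C \<and> C - {a} = {b}) \<longleftrightarrow> C = {a,b}" using ab by auto
  finally show ?thesis by simp
qed (auto simp: smult_infinite)

lemma theta2_eq: "theta2 n C x = - (\<Sum>k\<in>{1..n}. if C = {2*k-1, 2*k} then 1 else 0)"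
  unfolding theta2_def by (intro arg_cong[where f=uminus] sum.cong refl) (simp add: smult_gen_gen)

lemma insert_pair_iff: "j \<notin> B \<Longrightarrow> c \<noteq> j \<Longrightarrow> (insert j B = {j,c}) = (B = {c})"
  by auto

lemma theta2_insert:
  assumes j: "j \<in> {1..2*n}" and jB: "j \<notin> B"
  shows "theta2 n (insert j B) x = - (if B = {if odd j then j+1 else j-1} then 1 else 0)"
proof -
  define p where "p = (if odd j then j+1 else j-1)"
  define m where "m = (j+1) div 2"
  have m: "m \<in> {1..n}" "{2*m-1, 2*m} = {j, p}" "p \<noteq> j"
    using j unfolding m_def p_def by (auto; presburger)+
  have summand: "(if insert j B = {2*k-1, 2*k} then 1 else 0) = (if k = m then (if B = {p} then 1 else 0) else (0::real))"
    if k: "k \<in> {1..n}" for k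
  proof (cases "k = m")
    case True then show ?thesis using m insert_pair_iff[OF jB m(3)] by simp
  next
    case False
    then have "j \<notin> {2*k-1, 2*k}" using j k unfolding m_def by auto
    then show ?thesis using False by auto
  qed
  have "(\<Sum>k\<in>{1..n}. if insert j B = {2*k-1, 2*k} then 1 else 0)
      = (\<Sum>k\<in>{1..n}. if k = m then (if B = {p} then 1 else 0) else (0::real))"
    by (rule sum.cong[OF refl summand])
  then show ?thesis using m(1) unfolding theta2_eq p_def by simp
qed

lemma oder_theta2:
  assumes j: "j \<in> {1..2*n}"
  shows "oder j (theta2 n) B x = -2 * gup j B x"
proof (cases "j \<in> B")
  case True then show ?thesis using j by (auto simp: oder_eq gup_def gen_def)
next
  case False
  have "{b \<in> {j-1}. b < j} = {j-1}" using j by auto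
  then have "nbelow {if odd j then j+1 else j-1} j = (if odd j then 0 else 1)"
    by (simp add: nbelow_def)
  then show ?thesis using False theta2_insert[OF j False, of x]
    by (cases "odd j") (simp_all add: oder_eq gup_def gen_def)
qed

lemma graded_gup: "j \<in> {1..2*n} \<Longrightarrow> graded (gup j) 1 {1..2*n}"
  unfolding graded_def gup_def gen_def by (auto; presburger)

lemma gup_spow_n: "j \<in> {1..2*n} \<Longrightarrow> smult (gup j) (spow (theta2 n) n) B x = 0"
  by (rule graded_zero[OF graded_smult[OF graded_gup graded_theta2_pow]]) auto

lemma oder_spow_gen:
  assumes j: "j \<in> {1..2*n}"
  shows "oder j (spow (theta2 n) k) C x = (if k = 0 then 0 else real k * (-2) * smult (gup j) (spow (theta2 n) (k - 1)) C x)"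
proof (cases k)
  case 0 then show ?thesis by (simp add: spow_0 oder_eq sone_def)
next
  case (Suc m)
  have "smult (oder j (theta2 n)) (spow (theta2 n) m) C x = (-2) * smult (gup j) (spow (theta2 n) m) C x"
    by (rule smult_scal_l) (rule oder_theta2[OF j])
  then show ?thesis using oder_spow[OF graded_theta2 even_numeral, where j=j and k=m and B=C and x=x] Suc by (simp add: algebra_simps)
qed

lemma line_deriv:
  assumes "(g has_derivative g') (at (y + t0 *\<^sub>R v))"
  shows "((\<lambda>t. g (y + t *\<^sub>R v)) has_real_derivative g' v) (at t0)"
proof -
  have l: "((\<lambda>t. y + t *\<^sub>R v) has_derivative (\<lambda>t. t *\<^sub>R v)) (at t0)"
    by (auto intro!: derivative_eq_intros)
  have "((\<lambda>t. g (y + t *\<^sub>R v)) has_derivative (\<lambda>t. g' (t *\<^sub>R v))) (at t0)"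
    by (rule has_derivative_compose[OF l assms])
  moreover have "\<And>t. g' (t *\<^sub>R v) = t * g' v"
    using has_derivative_bounded_linear[OF assms] by (metis bounded_linear.linear linear_scale real_scaleR_def)
  ultimately show ?thesis
    by (intro has_derivative_imp_has_field_derivative) (auto simp: mult.commute)
qed

lemma pd_has_derivative:
  assumes "(g has_derivative g') (at x)"
  shows "pd i g x = g' (axis i 1)"
  unfolding pd_def
  by (rule DERIV_imp_deriv, rule line_deriv) (use assms in simp)

lemma pd_frechet:
  assumes "g differentiable (at x)"
  shows "pd i g x = frechet_derivative g (at x) (axis i 1)"
  using assms frechet_derivative_works pd_has_derivative by blast

lemma dir_deriv:
  assumes "g differentiable (at (y + t *\<^sub>R axis i 1))"
  shows "((\<lambda>s. g (y + s *\<^sub>R axis i 1)) has_real_derivative pd i g (y + t *\<^sub>R axis i 1)) (at t)"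
proof -
  obtain g' where g': "(g has_derivative g') (at (y + t *\<^sub>R axis i 1))"
    using assms differentiable_def by blast
  show ?thesis using line_deriv[OF g'] pd_has_derivative[OF g'] by simp
qed

lemma pd_const: "pd i (\<lambda>y. c) = (\<lambda>y. 0)"
  unfolding pd_def by simp

lemma pd_lin:
  assumes "\<And>a. a \<in> S \<Longrightarrow> g a differentiable (at x)"
  shows "pd i (\<lambda>y. \<Sum>a\<in>S. c a * g a y) x = (\<Sum>a\<in>S. c a * pd i (g a) x)"
proof (cases "finite S")
  case True
  have "((\<lambda>y. \<Sum>a\<in>S. c a * g a y) has_derivative (\<lambda>h. \<Sum>a\<in>S. c a * frechet_derivative (g a) (at x) h)) (at x)"
    using assms by (intro derivative_intros) (simp add: frechet_derivative_works[symmetric])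
  then show ?thesis using assms by (simp add: pd_has_derivative pd_frechet)
qed (simp add: pd_const)

lemma diff_lin:
  fixes g :: "'b \<Rightarrow> real^'m::finite \<Rightarrow> real"
  assumes "\<And>a. a \<in> S \<Longrightarrow> g a differentiable (at x)"
  shows "(\<lambda>y. \<Sum>a\<in>S. c a * g a y) differentiable (at x)"
proof (cases "finite S")
  case True
  have "((\<lambda>y. \<Sum>a\<in>S. c a * g a y) has_derivative (\<lambda>h. \<Sum>a\<in>S. c a * frechet_derivative (g a) (at x) h)) (at x)"
    using assms True by (intro has_derivative_sum has_derivative_mult_right) (simp add: frechet_derivative_works[symmetric])
  then show ?thesis unfolding differentiable_def by blast
qed simp

lemma pd_mult:
  assumes "g differentiable (at x)" "h differentiable (at x)"
  shows "pd i (\<lambda>y. g y * h y) x = pd i g x * h x + g x * pd i h x"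
proof -
  have "((\<lambda>y. g y * h y) has_derivative (\<lambda>v. g x * frechet_derivative h (at x) v + frechet_derivative g (at x) v * h x)) (at x)"
    using assms by (intro derivative_intros) (simp_all add: frechet_derivative_works[symmetric])
  then show ?thesis using assms by (simp add: pd_has_derivative pd_frechet algebra_simps)
qed

lemma pd_diff:
  assumes "a differentiable (at x)" "b differentiable (at x)"
  shows "pd i (\<lambda>y. a y - b y) x = pd i a x - pd i b x"
proof -
  have "((\<lambda>y. a y - b y) has_derivative (\<lambda>v. frechet_derivative a (at x) v - frechet_derivative b (at x) v)) (at x)"
    using assms by (intro has_derivative_diff) (simp_all add: frechet_derivative_works[symmetric])
  then show ?thesis using assms by (simp add: pd_has_derivative pd_frechet)
qed

lemma pd_cmult: "g differentiable (at x) \<Longrightarrow> pd i (\<lambda>y. c * g y) x = c * pd i g x"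
  using pd_mult[of "\<lambda>y. c" x g i] by (simp add: pd_const)

lemma has_derivative_coord: "((\<lambda>y::real^'m::finite. y$j) has_derivative (\<lambda>h. h$j)) (at x)"
  using bounded_linear.has_derivative[OF bounded_linear_vec_nth has_derivative_ident] .

lemma pd_coord: "pd i (\<lambda>y. y$j) x = (if i = j then 1 else 0)"
  by (simp add: pd_has_derivative[OF has_derivative_coord] axis_def)

lemma pd_norm: "x \<noteq> 0 \<Longrightarrow> pd j (\<lambda>y. norm y) x = x$j / norm x"
  using pd_has_derivative[OF has_derivative_norm] by (simp add: inner_axis' sgn_div_norm divide_inverse mult.commute)

text \<open>Since d/dr^2 is singular at the origin, everything is done on the punctured space:
  eq0 is equality away from 0, and partial derivatives only depend on it.\<close>

definition eq0 :: "(real^'m \<Rightarrow> real) \<Rightarrow> (real^'m \<Rightarrow> real) \<Rightarrow> bool" where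
  "eq0 g h \<longleftrightarrow> (\<forall>y. y \<noteq> 0 \<longrightarrow> g y = h y)"

lemma pd_local:
  assumes "eq0 g h" "x \<noteq> 0"
  shows "pd i g x = pd i h x"
  unfolding pd_def
proof (rule deriv_cong_ev[OF _ refl])
  show "\<forall>\<^sub>F t in nhds 0. g (x + t *\<^sub>R axis i 1) = h (x + t *\<^sub>R axis i 1)"
    unfolding eventually_nhds_metric
  proof (intro exI conjI allI impI)
    show "norm x > 0" using assms(2) by simp
    fix t :: real assume "dist t 0 < norm x"
    then have "norm (t *\<^sub>R axis i (1::real)) < norm x" by simp
    then have "x + t *\<^sub>R axis i 1 \<noteq> 0"
      by (metis add.inverse_unique norm_minus_cancel order_less_irrefl)
    then show "g (x + t *\<^sub>R axis i 1) = h (x + t *\<^sub>R axis i 1)" using assms(1) by (simp add: eq0_def)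
  qed
qed

lemma eq0_pd: "eq0 g h \<Longrightarrow> eq0 (pd i g) (pd i h)"
  using pd_local unfolding eq0_def by blast

lemma eq0_foldr: "eq0 g h \<Longrightarrow> eq0 (foldr pd js g) (foldr pd js h)"
  by (induction js) (auto intro: eq0_pd)

lemma eq0_refl[simp]: "eq0 g g" by (simp add: eq0_def)

lemma eq0_trans: "eq0 g h \<Longrightarrow> eq0 h k \<Longrightarrow> eq0 g k" by (simp add: eq0_def)

lemma diff_local:
  assumes "eq0 g h" "x \<noteq> 0" "g differentiable (at x)"
  shows "h differentiable (at x)"
proof -
  obtain g' where "(g has_derivative g') (at x)" using assms(3) differentiable_def by blast
  then have "(h has_derivative g') (at x)"
    by (rule has_derivative_transform_within_open[OF _ open_Compl[OF closed_singleton]]) (use assms in \<open>auto simp: eq0_def\<close>)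
  then show ?thesis using differentiable_def by blast
qed

text \<open>It is closed under the algebraic operations and contains 1/r, so it is the natural
  class of coefficients for phi.\<close>

definition Cm0 :: "nat \<Rightarrow> (real^'m \<Rightarrow> real) \<Rightarrow> bool" where
  "Cm0 m g \<longleftrightarrow> (\<forall>js. length js \<le> m \<longrightarrow> (\<forall>x. x \<noteq> 0 \<longrightarrow> foldr pd js g differentiable (at x)))"

definition smooth0 :: "(real^'m \<Rightarrow> real) \<Rightarrow> bool" where
  "smooth0 g \<longleftrightarrow> (\<forall>m. Cm0 m g)"

lemma Cm0_0: "Cm0 0 g \<longleftrightarrow> (\<forall>x. x \<noteq> 0 \<longrightarrow> g differentiable (at x))"
  by (simp add: Cm0_def)

lemma Cm0_Suc: fixes g :: "real^'m::finite \<Rightarrow> real" shows "Cm0 (Suc m) g \<longleftrightarrow> (\<forall>x. x \<noteq> 0 \<longrightarrow> g differentiable (at x)) \<and> (\<forall>i. Cm0 m (pd i g))"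
proof
  assume a: "Cm0 (Suc m) g"
  show "(\<forall>x. x \<noteq> 0 \<longrightarrow> g differentiable (at x)) \<and> (\<forall>i. Cm0 m (pd i g))"
  proof
    show "\<forall>x. x \<noteq> 0 \<longrightarrow> g differentiable (at x)"
    proof (intro allI impI)
      fix x :: "real^'m" assume "x \<noteq> 0"
      then have "foldr pd [] g differentiable (at x)" using a unfolding Cm0_def by (metis list.size(3) zero_le)
      then show "g differentiable (at x)" by simp
    qed
    show "\<forall>i. Cm0 m (pd i g)" unfolding Cm0_def
    proof (intro allI impI)
      fix i and js :: "'m list" and x :: "real^'m" assume l: "length js \<le> m" and x: "x \<noteq> 0"
      have "length (js@[i]) \<le> Suc m" using l by simp
      with a x have "foldr pd (js@[i]) g differentiable (at x)" unfolding Cm0_def by blast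
      then show "foldr pd js (pd i g) differentiable (at x)" by simp
    qed
  qed
next
  assume a: "(\<forall>x. x \<noteq> 0 \<longrightarrow> g differentiable (at x)) \<and> (\<forall>i. Cm0 m (pd i g))"
  show "Cm0 (Suc m) g" unfolding Cm0_def
  proof (intro allI impI)
    fix js :: "'m list" and x :: "real^'m" assume l: "length js \<le> Suc m" and x: "x \<noteq> 0"
    show "foldr pd js g differentiable (at x)"
    proof (cases js rule: rev_exhaust)
      case Nil then show ?thesis using a x by simp
    next
      case (snoc ys i)
      then have "foldr pd js g = foldr pd ys (pd i g)" by simp
      moreover have "length ys \<le> m" using l snoc by simp
      ultimately show ?thesis using a x unfolding Cm0_def by metis
    qed
  qed
qed

lemma Cm0_cong: "Cm0 m g \<Longrightarrow> eq0 g h \<Longrightarrow> Cm0 m h"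
  unfolding Cm0_def by (meson diff_local eq0_foldr)

lemma smooth0_pd: "smooth0 g \<Longrightarrow> smooth0 (pd i g)"
  unfolding smooth0_def using Cm0_Suc by blast

lemma smooth0_differentiable: "smooth0 g \<Longrightarrow> x \<noteq> 0 \<Longrightarrow> g differentiable (at x)"
  unfolding smooth0_def using Cm0_0 by blast

lemma Cm0_const: "Cm0 m (\<lambda>y. c)"
  by (induction m arbitrary: c) (auto simp: Cm0_0 Cm0_Suc pd_const)

lemma Cm0_lin: fixes g :: "'b \<Rightarrow> real^'m::finite \<Rightarrow> real" shows "(\<And>a. a \<in> S \<Longrightarrow> Cm0 m (g a)) \<Longrightarrow> Cm0 m (\<lambda>y. \<Sum>a\<in>S. c a * g a y)"
proof (induction m arbitrary: g)
  case 0 then show ?case by (auto simp: Cm0_0 intro!: diff_lin)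
next
  case (Suc m)
  show ?case unfolding Cm0_Suc
  proof (intro conjI allI impI)
    fix x :: "real^'m" assume "x \<noteq> 0"
    then show "(\<lambda>y. \<Sum>a\<in>S. c a * g a y) differentiable (at x)" using Suc.prems
      by (intro diff_lin) (auto simp: Cm0_Suc)
  next
    fix i
    have "Cm0 m (\<lambda>y. \<Sum>a\<in>S. c a * pd i (g a) y)" using Suc by (intro Suc.IH) (auto simp: Cm0_Suc)
    moreover have "eq0 (\<lambda>y. \<Sum>a\<in>S. c a * pd i (g a) y) (pd i (\<lambda>y. \<Sum>a\<in>S. c a * g a y))"
      unfolding eq0_def using Suc.prems by (auto simp: Cm0_Suc pd_lin)
    ultimately show "Cm0 m (pd i (\<lambda>y. \<Sum>a\<in>S. c a * g a y))" by (rule Cm0_cong)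
  qed
qed

lemma Cm0_mono: "Cm0 (Suc m) g \<Longrightarrow> Cm0 m g"
  unfolding Cm0_def by auto

lemma Cm0_add: "Cm0 m g \<Longrightarrow> Cm0 m h \<Longrightarrow> Cm0 m (\<lambda>y. g y + h y)"
  using Cm0_lin[of "{True,False}" m "\<lambda>b. if b then g else h" "\<lambda>_. 1"] by simp

lemma Cm0_mult: fixes g :: "real^'m::finite \<Rightarrow> real" shows "Cm0 m g \<Longrightarrow> Cm0 m h \<Longrightarrow> Cm0 m (\<lambda>y. g y * h y)"
proof (induction m arbitrary: g h)
  case 0 then show ?case by (auto simp: Cm0_0 intro!: differentiable_mult)
next
  case (Suc m)
  show ?case unfolding Cm0_Suc
  proof (intro conjI allI impI)
    fix x :: "real^'m" assume "x \<noteq> 0"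
    then show "(\<lambda>y. g y * h y) differentiable (at x)" using Suc.prems
      by (auto simp: Cm0_Suc intro!: differentiable_mult)
  next
    fix i
    have "Cm0 m (\<lambda>y. pd i g y * h y + g y * pd i h y)"
      using Suc by (intro Cm0_add Suc.IH) (auto simp: Cm0_Suc intro: Cm0_mono)
    moreover have "eq0 (\<lambda>y. pd i g y * h y + g y * pd i h y) (pd i (\<lambda>y. g y * h y))"
      unfolding eq0_def using Suc.prems by (auto simp: Cm0_Suc pd_mult)
    ultimately show "Cm0 m (pd i (\<lambda>y. g y * h y))" by (rule Cm0_cong)
  qed
qed

lemma Cm0_scal: "Cm0 m g \<Longrightarrow> Cm0 m (\<lambda>y. c * g y)"
  using Cm0_mult[OF Cm0_const] by blast

lemma Cm0_pow: "Cm0 m g \<Longrightarrow> Cm0 m (\<lambda>y. g y ^ k)"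
  by (induction k) (auto intro: Cm0_mult Cm0_const)

lemma Cm0_coord: "Cm0 m (\<lambda>y. y$j)"
proof (cases m)
  case 0 then show ?thesis using has_derivative_coord by (auto simp: Cm0_0 differentiable_def)
next
  case (Suc k)
  have "pd i (\<lambda>y. y$j) = (\<lambda>y. if i = j then 1 else 0)" for i by (rule ext) (rule pd_coord)
  then show ?thesis using has_derivative_coord Suc by (auto simp: Cm0_Suc differentiable_def Cm0_const)
qed

definition rinv :: "real^'m::finite \<Rightarrow> real" where "rinv y = 1 / norm y"

lemma has_derivative_rinv: "x \<noteq> 0 \<Longrightarrow> (rinv has_derivative (\<lambda>h. - (inverse (norm x) * inner h (sgn x) * inverse (norm x)))) (at x)"
proof -
  assume x: "x \<noteq> 0"
  have "((\<lambda>y. inverse (norm y)) has_derivative (\<lambda>h. - (inverse (norm x) * inner h (sgn x) * inverse (norm x)))) (at x)"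
    using Deriv.has_derivative_inverse[OF _ has_derivative_norm[OF x]] x by simp
  moreover have e: "(\<lambda>y. inverse (norm y)) = rinv" by (rule ext) (simp add: rinv_def divide_inverse)
  ultimately show ?thesis by (simp only: e)
qed

lemma pd_rinv: "x \<noteq> 0 \<Longrightarrow> pd i rinv x = - (x$i) * rinv x ^ 3"
  using pd_has_derivative[OF has_derivative_rinv] by (simp add: inner_axis' sgn_div_norm rinv_def power3_eq_cube divide_inverse algebra_simps)

lemma Cm0_rinv: "Cm0 m (rinv :: real^'m::finite \<Rightarrow> real)"
proof (induction m)
  case 0 then show ?case using has_derivative_rinv by (auto simp: Cm0_0 differentiable_def)
next
  case (Suc m)
  have "Cm0 m (\<lambda>y. (-1) * (y$i * rinv y ^ 3))" for i :: 'm
    by (intro Cm0_scal Cm0_mult Cm0_pow Cm0_coord Suc)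
  moreover have "eq0 (\<lambda>y. (-1) * (y$i * rinv y ^ 3)) (pd i rinv)" for i :: 'm
    by (simp add: eq0_def pd_rinv)
  ultimately show ?case using has_derivative_rinv by (auto simp: Cm0_Suc differentiable_def intro: Cm0_cong)
qed

lemma smooth0_const: "smooth0 (\<lambda>y. c)" by (simp add: smooth0_def Cm0_const)

lemma smooth0_coord: "smooth0 (\<lambda>y. y$j)" by (simp add: smooth0_def Cm0_coord)

lemma smooth0_rinv: "smooth0 rinv" by (simp add: smooth0_def Cm0_rinv)

lemma smooth0_mult: "smooth0 g \<Longrightarrow> smooth0 h \<Longrightarrow> smooth0 (\<lambda>y. g y * h y)" by (simp add: smooth0_def Cm0_mult)

lemma smooth0_add: "smooth0 g \<Longrightarrow> smooth0 h \<Longrightarrow> smooth0 (\<lambda>y. g y + h y)" by (simp add: smooth0_def Cm0_add)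

lemma smooth0_scal: "smooth0 g \<Longrightarrow> smooth0 (\<lambda>y. c * g y)" by (simp add: smooth0_def Cm0_scal)

lemma smooth0_pow: "smooth0 g \<Longrightarrow> smooth0 (\<lambda>y. g y ^ k)" by (simp add: smooth0_def Cm0_pow)

lemma smooth0_lin: "(\<And>a. a \<in> S \<Longrightarrow> smooth0 (g a)) \<Longrightarrow> smooth0 (\<lambda>y. \<Sum>a\<in>S. c a * g a y)"
  by (simp add: smooth0_def Cm0_lin)

lemma smooth0_minus: "smooth0 g \<Longrightarrow> smooth0 h \<Longrightarrow> smooth0 (\<lambda>y. g y - h y)"
  using smooth0_add[of g "\<lambda>y. (-1) * h y"] smooth0_scal by fastforce

lemma smooth_fun_smooth0: "smooth_fun g \<Longrightarrow> smooth0 g"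
  unfolding smooth_fun_def smooth0_def Cm0_def by (auto simp: differentiable_on_def)

lemma norm_sq: "norm (x::real^'m::finite) ^ 2 = (\<Sum>i\<in>UNIV. x$i * x$i)"
  by (simp add: power2_norm_eq_inner inner_vec_def)

lemma norm_rinv: "x \<noteq> 0 \<Longrightarrow> norm x * rinv x = 1" by (simp add: rinv_def)

lemma norm_eq_rinv: "norm (y::real^'m::finite) = (\<Sum>i\<in>UNIV. 1 * (y$i * y$i)) * rinv y"
proof (cases "y = 0")
  case False then show ?thesis using norm_sq[of y] by (simp add: rinv_def power2_eq_square field_simps)
qed (simp add: rinv_def)

lemma smooth0_norm: "smooth0 (\<lambda>y::real^'m::finite. norm y)"
proof -
  have "smooth0 (\<lambda>y::real^'m. (\<Sum>i\<in>UNIV. 1 * (y$i * y$i)) * rinv y)"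
    by (intro smooth0_mult smooth0_lin smooth0_coord smooth0_rinv)
  then show ?thesis by (subst norm_eq_rinv) simp
qed

text \<open>Symmetry of second partial derivatives for smooth0 functions, via a double mean value
  argument on the mixed second difference.\<close>

lemma near_nonzero: "(x::'a::real_normed_vector) \<noteq> 0 \<Longrightarrow> norm (y - x) < norm x \<Longrightarrow> y \<noteq> 0"
  by auto

lemma second_difference_mvt:
  fixes g :: "real^'m::finite \<Rightarrow> real" and x :: "real^'m" and i j :: 'm and h :: real
  defines "u \<equiv> axis i (1::real)" and "v \<equiv> axis j (1::real)"
  assumes g: "smooth0 g" and h: "0 < h"
    and nz: "\<And>s t. 0 \<le> s \<Longrightarrow> s \<le> h \<Longrightarrow> 0 \<le> t \<Longrightarrow> t \<le> h \<Longrightarrow> x + s *\<^sub>R u + t *\<^sub>R v \<noteq> 0"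
  shows "\<exists>z w. 0 < z \<and> z < h \<and> 0 < w \<and> w < h \<and>
           g (x + h *\<^sub>R v + h *\<^sub>R u) - g (x + h *\<^sub>R u) - g (x + h *\<^sub>R v) + g x
             = h^2 * pd j (pd i g) (x + z *\<^sub>R u + w *\<^sub>R v)"
proof -
  define phi where "phi t = g (x + h *\<^sub>R v + t *\<^sub>R u) - g (x + t *\<^sub>R u)" for t
  have "\<exists>z. 0 < z \<and> z < h \<and> phi h - phi 0 = (h - 0) * (pd i g (x + h *\<^sub>R v + z *\<^sub>R u) - pd i g (x + z *\<^sub>R u))"
  proof (rule MVT2)
    fix t assume t: "0 \<le> t" "t \<le> h"
    have a: "x + h *\<^sub>R v + t *\<^sub>R u \<noteq> 0" using nz[of t h] t h by (simp add: algebra_simps)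
    have b: "x + t *\<^sub>R u \<noteq> 0" using nz[of t 0] t by simp
    show "(phi has_real_derivative (pd i g (x + h *\<^sub>R v + t *\<^sub>R u) - pd i g (x + t *\<^sub>R u))) (at t)"
      unfolding phi_def u_def using a b g unfolding u_def
      by (intro DERIV_diff dir_deriv smooth0_differentiable) auto
  qed (use h in auto)
  then obtain z where z: "0 < z" "z < h"
    "phi h - phi 0 = h * (pd i g (x + h *\<^sub>R v + z *\<^sub>R u) - pd i g (x + z *\<^sub>R u))"
    by auto
  define psi where "psi s = pd i g (x + z *\<^sub>R u + s *\<^sub>R v)" for s
  have "\<exists>w. 0 < w \<and> w < h \<and> psi h - psi 0 = (h - 0) * pd j (pd i g) (x + z *\<^sub>R u + w *\<^sub>R v)"
  proof (rule MVT2)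
    fix s assume s: "0 \<le> s" "s \<le> h"
    have "x + z *\<^sub>R u + s *\<^sub>R v \<noteq> 0" using nz[of z s] s z by simp
    then show "(psi has_real_derivative pd j (pd i g) (x + z *\<^sub>R u + s *\<^sub>R v)) (at s)"
      unfolding psi_def v_def using g unfolding v_def by (intro dir_deriv smooth0_differentiable smooth0_pd)
  qed (use h in auto)
  then obtain w where w: "0 < w" "w < h" "psi h - psi 0 = h * pd j (pd i g) (x + z *\<^sub>R u + w *\<^sub>R v)"
    by auto
  have "g (x + h *\<^sub>R v + h *\<^sub>R u) - g (x + h *\<^sub>R u) - g (x + h *\<^sub>R v) + g x = phi h - phi 0"
    unfolding phi_def by simp
  also have "\<dots> = h * (psi h - psi 0)" unfolding z(3) psi_def by (simp add: algebra_simps)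
  also have "\<dots> = h^2 * pd j (pd i g) (x + z *\<^sub>R u + w *\<^sub>R v)" unfolding w(3) by (simp add: power2_eq_square)
  finally show ?thesis using z w by blast
qed

lemma schwarz_approx:
  fixes g :: "real^'m::finite \<Rightarrow> real"
  assumes g: "smooth0 g" and x: "x \<noteq> 0" and e: "e > 0"
  shows "\<exists>d>0. \<forall>h. 0 < h \<and> h < d \<longrightarrow>
     \<bar>(g (x + h *\<^sub>R axis j 1 + h *\<^sub>R axis i 1) - g (x + h *\<^sub>R axis i 1) - g (x + h *\<^sub>R axis j 1) + g x) / h^2
       - pd j (pd i g) x\<bar> < e"
proof -
  let ?u = "axis i (1::real)" and ?v = "axis j (1::real)"
  let ?q = "pd j (pd i g)"
  have "?q differentiable (at x)" using g x by (intro smooth0_differentiable smooth0_pd)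
  then have "isCont ?q x" by (rule differentiable_imp_continuous_within)
  then obtain d0 where d0: "d0 > 0" "\<And>y. dist y x < d0 \<Longrightarrow> dist (?q y) (?q x) < e"
    using e unfolding continuous_at_eps_delta by blast
  define d where "d = min (d0/2) (norm x / 2)"
  have dpos: "d > 0" using d0 x unfolding d_def by simp
  have nrm: "norm (s *\<^sub>R ?u + t *\<^sub>R ?v) < 2 * d" if "0 \<le> s" "s < d" "0 \<le> t" "t < d" for s t
  proof -
    have "norm (s *\<^sub>R ?u + t *\<^sub>R ?v) \<le> norm (s *\<^sub>R ?u) + norm (t *\<^sub>R ?v)" by (rule norm_triangle_ineq)
    also have "\<dots> = s + t" using that by simp
    finally show ?thesis using that by simp
  qed
  show ?thesis
  proof (intro exI[of _ d] conjI allI impI dpos)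
    fix h :: real assume h: "0 < h \<and> h < d"
    have "x + s *\<^sub>R ?u + t *\<^sub>R ?v \<noteq> 0" if "0 \<le> s" "s \<le> h" "0 \<le> t" "t \<le> h" for s t
      using nrm[of s t] that h x unfolding d_def by (intro near_nonzero[OF x]) (auto simp: algebra_simps)
    then obtain z w where zw: "0 < z" "z < h" "0 < w" "w < h"
      "g (x + h *\<^sub>R ?v + h *\<^sub>R ?u) - g (x + h *\<^sub>R ?u) - g (x + h *\<^sub>R ?v) + g x = h^2 * ?q (x + z *\<^sub>R ?u + w *\<^sub>R ?v)"
      using second_difference_mvt[OF g, where h=h and x=x and i=i and j=j] h by blast
    have "dist (x + z *\<^sub>R ?u + w *\<^sub>R ?v) x < d0"
      using nrm[of z w] zw h unfolding d_def by (simp add: dist_norm algebra_simps)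
    then have "dist (?q (x + z *\<^sub>R ?u + w *\<^sub>R ?v)) (?q x) < e" by (rule d0)
    then show "\<bar>(g (x + h *\<^sub>R ?v + h *\<^sub>R ?u) - g (x + h *\<^sub>R ?u) - g (x + h *\<^sub>R ?v) + g x) / h^2 - ?q x\<bar> < e"
      unfolding zw(5) using h by (simp add: dist_real_def)
  qed
qed

lemma schwarz:
  fixes g :: "real^'m::finite \<Rightarrow> real"
  assumes g: "smooth0 g" and x: "x \<noteq> 0"
  shows "pd j (pd i g) x = pd i (pd j g) x"
proof (rule ccontr)
  assume ne: "pd j (pd i g) x \<noteq> pd i (pd j g) x"
  define e where "e = \<bar>pd j (pd i g) x - pd i (pd j g) x\<bar> / 2"
  have e: "e > 0" using ne unfolding e_def by simp
  obtain d1 where d1: "d1 > 0" "\<And>h. 0 < h \<and> h < d1 \<Longrightarrow>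
     \<bar>(g (x + h *\<^sub>R axis j 1 + h *\<^sub>R axis i 1) - g (x + h *\<^sub>R axis i 1) - g (x + h *\<^sub>R axis j 1) + g x) / h^2
       - pd j (pd i g) x\<bar> < e"
    using schwarz_approx[OF g x e, of j i] by blast
  obtain d2 where d2: "d2 > 0" "\<And>h. 0 < h \<and> h < d2 \<Longrightarrow>
     \<bar>(g (x + h *\<^sub>R axis i 1 + h *\<^sub>R axis j 1) - g (x + h *\<^sub>R axis j 1) - g (x + h *\<^sub>R axis i 1) + g x) / h^2
       - pd i (pd j g) x\<bar> < e"
    using schwarz_approx[OF g x e, of i j] by blast
  define h where "h = min d1 d2 / 2"
  have h: "0 < h \<and> h < d1" "0 < h \<and> h < d2" using d1 d2 unfolding h_def by auto
  have sym: "x + h *\<^sub>R axis i 1 + h *\<^sub>R axis j 1 = x + h *\<^sub>R axis j 1 + h *\<^sub>R axis i 1" by (simp add: algebra_simps)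
  let ?D = "(g (x + h *\<^sub>R axis j 1 + h *\<^sub>R axis i 1) - g (x + h *\<^sub>R axis i 1) - g (x + h *\<^sub>R axis j 1) + g x) / h^2"
  have a1: "\<bar>?D - pd j (pd i g) x\<bar> < e" using d1(2)[OF h(1)] .
  have a2: "\<bar>?D - pd i (pd j g) x\<bar> < e" using d2(2)[OF h(2)] unfolding sym by (simp add: algebra_simps)
  have "\<bar>pd j (pd i g) x - pd i (pd j g) x\<bar> < 2 * e" using a1 a2 by linarith
  then show False unfolding e_def by simp
qed

definition dr2f :: "(real^'m::finite \<Rightarrow> real) \<Rightarrow> real^'m \<Rightarrow> real" where
  "dr2f g = (\<lambda>x. 1 / (2 * norm x) * (\<Sum>i\<in>UNIV. x$i / norm x * pd i g x))"

lemma dr2_eq: "dr2 f A = dr2f (f A)" by (rule ext) (simp add: dr2_def dr_def dr2f_def)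

lemma dr2_pow: "(dr2 ^^ k) f = (\<lambda>C. (dr2f ^^ k) (f C))"
proof (rule ext)
  show "(dr2 ^^ k) f C = (dr2f ^^ k) (f C)" for C
    by (induction k arbitrary: C) (simp_all add: dr2_eq)
qed

lemma dr_eq_dr2f: "x \<noteq> 0 \<Longrightarrow> dr f A x = 2 * norm x * dr2f (f A) x"
  by (simp add: dr_def dr2f_def)

lemma dr2f_alt: "dr2f g = (\<lambda>x. (1/2) * rinv x ^ 2 * (\<Sum>i\<in>UNIV. 1 * (x$i * pd i g x)))"
proof (rule ext)
  fix x :: "real^'a"
  show "dr2f g x = (1/2) * rinv x ^ 2 * (\<Sum>i\<in>UNIV. 1 * (x$i * pd i g x))"
  proof (cases "x = 0")
    case False
    then show ?thesis by (simp add: dr2f_def rinv_def sum_distrib_left power2_eq_square field_simps)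
  qed (simp add: dr2f_def rinv_def)
qed

lemma smooth0_dr2f: "smooth0 g \<Longrightarrow> smooth0 (dr2f g)"
  unfolding dr2f_alt by (intro smooth0_mult smooth0_scal smooth0_pow smooth0_rinv smooth0_lin smooth0_coord smooth0_pd smooth0_const)

lemma dr2f_lin:
  assumes "x \<noteq> 0" "\<And>a. a \<in> S \<Longrightarrow> smooth0 (g a)"
  shows "dr2f (\<lambda>y. \<Sum>a\<in>S. c a * g a y) x = (\<Sum>a\<in>S. c a * dr2f (g a) x)"
proof -
  have "pd i (\<lambda>y. \<Sum>a\<in>S. c a * g a y) x = (\<Sum>a\<in>S. c a * pd i (g a) x)" for i
    using assms by (intro pd_lin) (auto intro: smooth0_differentiable)
  then show ?thesis unfolding dr2f_def
    by (simp add: sum_distrib_left sum.swap[of _ S] algebra_simps)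
qed

lemma dr2f_mult:
  assumes "x \<noteq> 0" "smooth0 u" "smooth0 v"
  shows "dr2f (\<lambda>y. u y * v y) x = dr2f u x * v x + u x * dr2f v x"
proof -
  have "pd i (\<lambda>y. u y * v y) x = pd i u x * v x + u x * pd i v x" for i
    using assms by (intro pd_mult) (auto intro: smooth0_differentiable)
  then show ?thesis unfolding dr2f_def
    by (simp add: sum_distrib_left sum_distrib_right sum.distrib algebra_simps)
qed

lemma dr2f_diff:
  assumes "x \<noteq> 0" "smooth0 a" "smooth0 b"
  shows "dr2f (\<lambda>y. a y - b y) x = dr2f a x - dr2f b x"
proof -
  have p: "pd i (\<lambda>y. a y - b y) x = pd i a x - pd i b x" for i
    using assms by (intro pd_diff) (auto intro: smooth0_differentiable)
  show ?thesis unfolding dr2f_def p by (simp add: sum_subtractf right_diff_distrib diff_divide_distrib)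
qed

lemma dr2f_cong: "eq0 g h \<Longrightarrow> eq0 (dr2f g) (dr2f h)"
  unfolding eq0_def dr2f_def using pd_local[of g h] by (simp add: eq0_def)

lemma dr2f_const: "dr2f (\<lambda>y. c) = (\<lambda>y. 0)"
  by (simp add: dr2f_def pd_const)

lemma dr2f_cmult: "x \<noteq> 0 \<Longrightarrow> smooth0 g \<Longrightarrow> dr2f (\<lambda>y. c * g y) x = c * dr2f g x"
  using dr2f_mult[of x "\<lambda>y. c" g] by (simp add: smooth0_const dr2f_const)

lemma dr2f_coord: "x \<noteq> 0 \<Longrightarrow> dr2f (\<lambda>y. y$j) x = (1/2) * rinv x ^ 2 * x$j"
proof -
  have "(\<Sum>i\<in>UNIV. 1 * (x $ i * pd i (\<lambda>y. y$j) x)) = (\<Sum>i\<in>UNIV. if i = j then x$j else 0)"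
    by (rule sum.cong) (auto simp: pd_coord)
  then show ?thesis unfolding dr2f_alt by simp
qed

lemma dr2f_rinv: "x \<noteq> 0 \<Longrightarrow> dr2f rinv x = - (1/2) * rinv x ^ 2 * rinv x"
proof -
  assume x: "x \<noteq> 0"
  have "dr2f rinv x = (1/2) * rinv x ^ 2 * (\<Sum>i\<in>UNIV. - (x$i * x$i) * rinv x ^ 3)"
    unfolding dr2f_alt using x by (simp add: pd_rinv algebra_simps)
  also have "(\<Sum>i\<in>UNIV. - (x$i * x$i) * rinv x ^ 3) = - (rinv x ^ 3) * (\<Sum>i\<in>UNIV. x$i * x$i)"
    by (simp add: sum_distrib_left sum_negf algebra_simps)
  also have "(\<Sum>i\<in>UNIV. x$i * x$i) = norm x ^ 2" by (simp add: norm_sq)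
  also have "(1/2) * rinv x ^ 2 * (- (rinv x ^ 3) * norm x ^ 2) = - (1/2) * rinv x ^ 2 * (norm x ^ 2 * rinv x ^ 2) * rinv x"
    by (simp add: algebra_simps power2_eq_square power3_eq_cube)
  also have "norm x ^ 2 * rinv x ^ 2 = 1" using norm_rinv[OF x] by (simp add: power_mult_distrib[symmetric])
  finally show ?thesis by simp
qed

lemma dr2f_norm: "x \<noteq> 0 \<Longrightarrow> dr2f (\<lambda>y. norm y) x = (1/2) * rinv x ^ 2 * norm x"
proof -
  assume x: "x \<noteq> 0"
  have "dr2f (\<lambda>y. norm y) x = (1/2) * rinv x ^ 2 * ((\<Sum>i\<in>UNIV. x$i * x$i) / norm x)"
    unfolding dr2f_alt using x by (simp add: pd_norm sum_divide_distrib)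
  also have "(\<Sum>i\<in>UNIV. x$i * x$i) = norm x * norm x" using norm_sq[of x] by (simp add: power2_eq_square)
  finally show ?thesis using x by simp
qed

lemma dr2f_rinv_pow: "x \<noteq> 0 \<Longrightarrow> dr2f (\<lambda>y. rinv y ^ p) x = - (of_nat p / 2) * rinv x ^ (p+2)"
proof (induction p)
  case 0 then show ?case by (simp add: dr2f_const)
next
  case (Suc p)
  have "dr2f (\<lambda>y. rinv y ^ Suc p) x = dr2f (\<lambda>y. rinv y * rinv y ^ p) x" by simp
  also have "\<dots> = dr2f rinv x * rinv x ^ p + rinv x * dr2f (\<lambda>y. rinv y ^ p) x"
    using Suc.prems by (intro dr2f_mult smooth0_rinv smooth0_pow)
  also have "\<dots> = - (of_nat (Suc p) / 2) * rinv x ^ (Suc p + 2)"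
    using Suc by (simp add: dr2f_rinv algebra_simps power2_eq_square power3_eq_cube power_add)
  finally show ?case .
qed

lemma smooth0_dr2f_pow: "smooth0 g \<Longrightarrow> smooth0 ((dr2f ^^ k) g)"
  by (induction k) (auto intro: smooth0_dr2f)

lemma dr2f_pow_cong: "eq0 g h \<Longrightarrow> eq0 ((dr2f ^^ k) g) ((dr2f ^^ k) h)"
  by (induction k) (auto intro: dr2f_cong)

lemma dr2f_pow_lin:
  assumes "\<And>a. a \<in> S \<Longrightarrow> smooth0 (g a)"
  shows "eq0 ((dr2f ^^ k) (\<lambda>y. \<Sum>a\<in>S. c a * g a y)) (\<lambda>y. \<Sum>a\<in>S. c a * (dr2f ^^ k) (g a) y)"
proof (induction k)
  case 0 then show ?case by simp
next
  case (Suc k)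
  have "eq0 (dr2f ((dr2f ^^ k) (\<lambda>y. \<Sum>a\<in>S. c a * g a y))) (dr2f (\<lambda>y. \<Sum>a\<in>S. c a * (dr2f ^^ k) (g a) y))"
    by (rule dr2f_cong[OF Suc.IH])
  moreover have "eq0 (dr2f (\<lambda>y. \<Sum>a\<in>S. c a * (dr2f ^^ k) (g a) y)) (\<lambda>y. \<Sum>a\<in>S. c a * (dr2f ^^ Suc k) (g a) y)"
    unfolding eq0_def using assms by (auto intro!: dr2f_lin smooth0_dr2f_pow)
  ultimately show ?case by (auto intro: eq0_trans)
qed

lemma dr2f_pow_zero: "(dr2f ^^ k) (\<lambda>y. 0) = (\<lambda>y. 0)"
  by (induction k) (simp_all add: dr2f_const)

lemma dr2f_pow_scal: "smooth0 g \<Longrightarrow> eq0 ((dr2f ^^ k) (\<lambda>y. c * g y)) (\<lambda>y. c * (dr2f ^^ k) g y)"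
  using dr2f_pow_lin[of "{()}" "\<lambda>_. g" k "\<lambda>_. c"] by simp

lemma pd_dr2f:
  fixes g :: "real^'m::finite \<Rightarrow> real"
  assumes g: "smooth0 g" and x: "x \<noteq> 0"
  shows "pd j (dr2f g) x = dr2f (pd j g) x + (1/2) * rinv x ^ 2 * pd j g x - 2 * x$j * rinv x ^ 2 * dr2f g x"
proof -
  define S where "S y = (\<Sum>i\<in>UNIV. 1 * (y$i * pd i g y))" for y
  have GS: "smooth0 S" unfolding S_def using g by (intro smooth0_lin smooth0_mult smooth0_coord smooth0_pd)
  have GN: "smooth0 (\<lambda>y. (1/2) * rinv y ^ 2)" by (intro smooth0_scal smooth0_pow smooth0_rinv)
  have e: "dr2f g = (\<lambda>y. (1/2) * rinv y ^ 2 * S y)" unfolding S_def by (rule dr2f_alt)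
  have p1: "pd j (\<lambda>y. (1/2) * rinv y ^ 2) x = - x$j * rinv x ^ 4"
  proof -
    have f: "(\<lambda>y. (1/2) * rinv y ^ 2) = (\<lambda>y. (1/2) * (rinv y * rinv y))" by (simp add: power2_eq_square)
    have "pd j (\<lambda>y. (1/2) * rinv y ^ 2) x = (1/2) * pd j (\<lambda>y. rinv y * rinv y) x"
      unfolding f using x smooth0_rinv by (intro pd_cmult smooth0_differentiable smooth0_mult)
    also have "pd j (\<lambda>y. rinv y * rinv y) x = pd j rinv x * rinv x + rinv x * pd j rinv x"
      using x smooth0_rinv by (intro pd_mult smooth0_differentiable)
    finally show ?thesis using x by (simp add: pd_rinv algebra_simps power_numeral_reduce)
  qed
  have p2: "pd j S x = pd j g x + (\<Sum>i\<in>UNIV. 1 * (x$i * pd i (pd j g) x))"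
  proof -
    have "pd j S x = (\<Sum>i\<in>UNIV. 1 * pd j (\<lambda>y. y$i * pd i g y) x)"
      unfolding S_def using x g by (intro pd_lin smooth0_differentiable smooth0_mult smooth0_coord smooth0_pd)
    also have "\<dots> = (\<Sum>i\<in>UNIV. (if j = i then pd i g x else 0) + x$i * pd j (pd i g) x)"
      using x g by (intro sum.cong refl) (simp add: pd_mult smooth0_differentiable smooth0_coord smooth0_pd pd_coord)
    also have "\<dots> = pd j g x + (\<Sum>i\<in>UNIV. x$i * pd j (pd i g) x)"
      by (simp add: sum.distrib)
    also have "(\<Sum>i\<in>UNIV. x$i * pd j (pd i g) x) = (\<Sum>i\<in>UNIV. 1 * (x$i * pd i (pd j g) x))"
      using schwarz[OF g x] by simp
    finally show ?thesis .
  qed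
  have m: "pd j (dr2f g) x = pd j (\<lambda>y. (1/2) * rinv y ^ 2) x * S x + (1/2) * rinv x ^ 2 * pd j S x"
    unfolding e using x GS GN by (intro pd_mult smooth0_differentiable)
  have e2: "dr2f (pd j g) x = (1/2) * rinv x ^ 2 * (\<Sum>i\<in>UNIV. 1 * (x$i * pd i (pd j g) x))"
    by (simp add: dr2f_alt)
  have e1: "dr2f g x = (1/2) * rinv x ^ 2 * S x" by (simp add: e)
  show ?thesis unfolding m e1 e2 p1 p2 by (simp add: algebra_simps power2_eq_square power4_eq_xxxx)
qed

(* The angular derivative Omega_j = r (d_j - 2 x_j d/dr^2) commutes with d/dr^2. *)
definition ang :: "'m \<Rightarrow> (real^'m::finite \<Rightarrow> real) \<Rightarrow> real^'m \<Rightarrow> real" where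
  "ang j g = (\<lambda>y. norm y * (pd j g y - 2 * y$j * dr2f g y))"

lemma smooth0_ang: "smooth0 g \<Longrightarrow> smooth0 (ang j g)"
  unfolding ang_def by (intro smooth0_mult smooth0_norm smooth0_minus smooth0_pd smooth0_coord smooth0_scal smooth0_dr2f)

lemma dr2f_ang:
  fixes g :: "real^'m::finite \<Rightarrow> real"
  assumes g: "smooth0 g" and x: "x \<noteq> 0"
  shows "dr2f (ang j g) x = ang j (dr2f g) x"
proof -
  define W where "W y = pd j g y - 2 * y$j * dr2f g y" for y
  have GW: "smooth0 W" unfolding W_def using g by (intro smooth0_minus smooth0_pd smooth0_mult smooth0_scal smooth0_coord smooth0_dr2f)
  have "dr2f (ang j g) x = dr2f (\<lambda>y. norm y) x * W x + norm x * dr2f W x"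
    unfolding ang_def W_def[symmetric] using x GW by (intro dr2f_mult smooth0_norm)
  moreover have "dr2f W x = dr2f (pd j g) x - dr2f (\<lambda>y. (2 * y$j) * dr2f g y) x"
    unfolding W_def using x g by (intro dr2f_diff smooth0_pd smooth0_mult smooth0_scal smooth0_coord smooth0_dr2f)
  moreover have "dr2f (\<lambda>y. (2 * y$j) * dr2f g y) x = dr2f (\<lambda>y. 2 * y$j) x * dr2f g x + 2 * x$j * dr2f (dr2f g) x"
    using x g by (intro dr2f_mult smooth0_scal smooth0_coord smooth0_dr2f)
  moreover have "dr2f (\<lambda>y. 2 * y$j) x = 2 * ((1/2) * rinv x ^ 2 * x$j)"
    using x by (simp add: dr2f_cmult smooth0_coord dr2f_coord)
  moreover have "ang j (dr2f g) x = norm x * (pd j (dr2f g) x - 2 * x$j * dr2f (dr2f g) x)" by (simp add: ang_def)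
  moreover have "W x = pd j g x - 2 * x$j * dr2f g x" by (simp add: W_def)
  ultimately show ?thesis
    using pd_dr2f[OF g x, of j] dr2f_norm[OF x] by (simp add: algebra_simps)
qed

lemma dr2f_pow_ang: "smooth0 g \<Longrightarrow> eq0 ((dr2f ^^ k) (ang j g)) (ang j ((dr2f ^^ k) g))"
proof (induction k)
  case 0 then show ?case by simp
next
  case (Suc k)
  have "eq0 (dr2f ((dr2f ^^ k) (ang j g))) (dr2f (ang j ((dr2f ^^ k) g)))" by (rule dr2f_cong[OF Suc.IH[OF Suc.prems]])
  moreover have "eq0 (dr2f (ang j ((dr2f ^^ k) g))) (ang j ((dr2f ^^ Suc k) g))"
    unfolding eq0_def using Suc.prems by (auto intro!: dr2f_ang smooth0_dr2f_pow)
  ultimately show ?case by (auto intro: eq0_trans)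
qed

lemma pd_radial_angular:
  "x \<noteq> 0 \<Longrightarrow> pd j g x = 2 * x$j * dr2f g x + rinv x * ang j g x"
  by (simp add: ang_def rinv_def)

definition falling :: "real \<Rightarrow> nat \<Rightarrow> real" where "falling al a = (\<Prod>i=0..<a. al - of_nat i)"

lemma falling_Suc: "falling al (Suc a) = falling al a * (al - of_nat a)"
  by (simp add: falling_def)

lemma falling_0: "falling al 0 = 1" by (simp add: falling_def)

lemma falling_gchoose: "falling al a = fact a * (al gchoose a)"
  by (simp add: falling_def gbinomial_prod_rev)

(* The closed form of (d/dr^2)^a u for d/dr^2 u = alpha u / r^2. *)
definition hdr2 :: "real \<Rightarrow> (real^'m::finite \<Rightarrow> real) \<Rightarrow> nat \<Rightarrow> real^'m \<Rightarrow> real" where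
  "hdr2 al u a = (\<lambda>y. falling al a * rinv y ^ (2*a) * u y)"

lemma smooth0_hdr2: "smooth0 u \<Longrightarrow> smooth0 (hdr2 al u a)"
  unfolding hdr2_def by (intro smooth0_mult smooth0_scal smooth0_pow smooth0_rinv)

lemma dr2f_hdr2:
  assumes u: "smooth0 u" "eq0 (dr2f u) (\<lambda>y. al * rinv y ^ 2 * u y)" and x: "x \<noteq> 0"
  shows "dr2f (hdr2 al u a) x = hdr2 al u (Suc a) x"
proof -
  have "dr2f (hdr2 al u a) x = dr2f (\<lambda>y. falling al a * rinv y ^ (2*a)) x * u x + falling al a * rinv x ^ (2*a) * dr2f u x"
    unfolding hdr2_def using u x by (intro dr2f_mult smooth0_scal smooth0_pow smooth0_rinv)
  also have "dr2f (\<lambda>y. falling al a * rinv y ^ (2*a)) x = falling al a * (- (of_nat (2*a) / 2) * rinv x ^ (2*a+2))"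
    using x by (simp add: dr2f_cmult smooth0_pow smooth0_rinv dr2f_rinv_pow)
  also have "dr2f u x = al * rinv x ^ 2 * u x" using u(2) x by (simp add: eq0_def)
  finally show ?thesis unfolding hdr2_def
    by (simp add: falling_Suc algebra_simps power_add power2_eq_square)
qed

lemma pascal_sum:
  fixes p q :: "nat \<Rightarrow> real"
  shows "(\<Sum>a\<le>k. of_nat (k choose a) * (p (Suc a) * q (k - a) + p a * q (Suc k - a)))
       = (\<Sum>a\<le>Suc k. of_nat (Suc k choose a) * (p a * q (Suc k - a)))"
proof -
  have r: "(\<Sum>a\<le>Suc k. of_nat (Suc k choose a) * (p a * q (Suc k - a)))
      = p 0 * q (Suc k) + (\<Sum>a\<le>k. of_nat (Suc k choose Suc a) * (p (Suc a) * q (k - a)))"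
    by (subst sum.atMost_Suc_shift) simp
  have s1: "(\<Sum>a\<le>k. of_nat (Suc k choose Suc a) * (p (Suc a) * q (k - a)))
      = (\<Sum>a\<le>k. of_nat (k choose a) * (p (Suc a) * q (k - a))) + (\<Sum>a\<le>k. of_nat (k choose Suc a) * (p (Suc a) * q (k - a)))"
    by (simp add: sum.distrib[symmetric] algebra_simps)
  have s2: "(\<Sum>a\<le>k. of_nat (k choose a) * (p a * q (Suc k - a)))
      = p 0 * q (Suc k) + (\<Sum>a\<le>k. of_nat (k choose Suc a) * (p (Suc a) * q (k - a)))"
  proof -
    have "(\<Sum>a\<le>k. of_nat (k choose a) * (p a * q (Suc k - a))) = (\<Sum>a\<le>Suc k. of_nat (k choose a) * (p a * q (Suc k - a)))"
      by (simp add: sum.atMost_Suc)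
    also have "\<dots> = p 0 * q (Suc k) + (\<Sum>a\<le>k. of_nat (k choose Suc a) * (p (Suc a) * q (k - a)))"
      by (subst sum.atMost_Suc_shift) simp
    finally show ?thesis .
  qed
  have t: "(\<Sum>a\<le>k. of_nat (k choose a) * (p (Suc a) * q (k - a) + p a * q (Suc k - a)))
     = (\<Sum>a\<le>k. of_nat (k choose a) * (p (Suc a) * q (k - a))) + (\<Sum>a\<le>k. of_nat (k choose a) * (p a * q (Suc k - a)))"
    by (simp add: distrib_left sum.distrib)
  show ?thesis unfolding t s2 r s1 by linarith
qed

lemma leibniz:
  assumes u: "smooth0 u" "eq0 (dr2f u) (\<lambda>y. al * rinv y ^ 2 * u y)" and g: "smooth0 g"
  shows "eq0 ((dr2f ^^ k) (\<lambda>y. u y * g y)) (\<lambda>y. \<Sum>a\<le>k. of_nat (k choose a) * (hdr2 al u a y * (dr2f ^^ (k - a)) g y))"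
proof (induction k)
  case 0 then show ?case by (simp add: eq0_def hdr2_def falling_0)
next
  case (Suc k)
  let ?h = "\<lambda>a y. hdr2 al u a y * (dr2f ^^ (k - a)) g y"
  have hG: "smooth0 (?h a)" for a using u g by (intro smooth0_mult smooth0_hdr2 smooth0_dr2f_pow)
  have "eq0 (dr2f ((dr2f ^^ k) (\<lambda>y. u y * g y))) (dr2f (\<lambda>y. \<Sum>a\<le>k. of_nat (k choose a) * ?h a y))"
    by (rule dr2f_cong[OF Suc.IH])
  moreover have "eq0 (dr2f (\<lambda>y. \<Sum>a\<le>k. of_nat (k choose a) * ?h a y))
     (\<lambda>y. \<Sum>a\<le>Suc k. of_nat (Suc k choose a) * (hdr2 al u a y * (dr2f ^^ (Suc k - a)) g y))"
    unfolding eq0_def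
  proof (intro allI impI)
    fix y :: "real^'a" assume y: "y \<noteq> 0"
    have "dr2f (\<lambda>y. \<Sum>a\<le>k. of_nat (k choose a) * ?h a y) y = (\<Sum>a\<le>k. of_nat (k choose a) * dr2f (?h a) y)"
      using y hG by (intro dr2f_lin) auto
    also have "\<dots> = (\<Sum>a\<le>k. of_nat (k choose a) * (hdr2 al u (Suc a) y * (dr2f ^^ (k - a)) g y + hdr2 al u a y * (dr2f ^^ (Suc k - a)) g y))"
    proof (intro sum.cong refl arg_cong2[where f="(*)"])
      fix a assume a: "a \<in> {..k}"
      have "dr2f (?h a) y = dr2f (hdr2 al u a) y * (dr2f ^^ (k - a)) g y + hdr2 al u a y * dr2f ((dr2f ^^ (k - a)) g) y"
        using y u g by (intro dr2f_mult smooth0_hdr2 smooth0_dr2f_pow)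
      moreover have "dr2f ((dr2f ^^ (k - a)) g) = (dr2f ^^ (Suc k - a)) g" using a by (simp add: Suc_diff_le)
      ultimately show "dr2f (?h a) y = hdr2 al u (Suc a) y * (dr2f ^^ (k - a)) g y + hdr2 al u a y * (dr2f ^^ (Suc k - a)) g y"
        using dr2f_hdr2[OF u y] by simp
    qed
    also have "\<dots> = (\<Sum>a\<le>Suc k. of_nat (Suc k choose a) * (hdr2 al u a y * (dr2f ^^ (Suc k - a)) g y))"
      by (rule pascal_sum[where p="\<lambda>a. hdr2 al u a y" and q="\<lambda>b. (dr2f ^^ b) g y"])
    finally show "dr2f (\<lambda>y. \<Sum>a\<le>k. of_nat (k choose a) * ?h a y) y = (\<Sum>a\<le>Suc k. of_nat (Suc k choose a) * (hdr2 al u a y * (dr2f ^^ (Suc k - a)) g y))" .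
  qed
  ultimately show ?case by (auto intro: eq0_trans)
qed

text \<open>Superfunctions whose coefficients do not depend on x (like theta^{2k}, x`_j, x`^j)
  act on coefficients by constant linear combinations, so they commute with d_i and d/dr^2.\<close>

definition xconst :: "'m sfun \<Rightarrow> bool" where
  "xconst K \<longleftrightarrow> (\<forall>C x y. K C x = K C y)"

lemma smult_xconst: assumes a: "xconst K" shows "smult K g C = (\<lambda>y. \<Sum>A\<in>Pow C. (ssign A (C-A) * K A 0) * g (C-A) y)"
proof -
  have k: "K A y = K A 0" for A y using a unfolding xconst_def by blast
  show ?thesis unfolding smult_def
  proof (intro ext sum.cong refl)
    fix y A show "ssign A (C - A) * K A y * g (C - A) y = ssign A (C - A) * K A 0 * g (C - A) y"
      using k[of A y] by simp
  qed
qed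

lemma smooth0_smult: "xconst K \<Longrightarrow> (\<And>C. smooth0 (g C)) \<Longrightarrow> smooth0 (smult K g C)"
  by (subst smult_xconst) (auto intro: smooth0_lin)

lemma pd_smult:
  assumes "xconst K" "\<And>C. g C differentiable (at x)"
  shows "pd i (smult K g C) x = smult K (\<lambda>C y. pd i (g C) y) C x"
  using assms by (simp add: smult_xconst pd_lin)

lemma dr2f_pow_smult:
  assumes "xconst K" "\<And>C. smooth0 (g C)"
  shows "eq0 ((dr2f ^^ k) (smult K g C)) (smult K (\<lambda>C. (dr2f ^^ k) (g C)) C)"
  using dr2f_pow_lin[of "Pow C" "\<lambda>A. g (C - A)" k "\<lambda>A. ssign A (C-A) * K A 0"] assms
  by (simp add: smult_xconst)

lemma dr2f_smult:
  assumes "xconst K" "\<And>C. smooth0 (g C)" "x \<noteq> 0"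
  shows "dr2f (smult K g B) x = smult K (\<lambda>C. dr2f (g C)) B x"
  using dr2f_pow_smult[OF assms(1,2), where k=1 and C=B] assms(3) by (simp add: eq0_def)

lemma xconst_sone: "xconst sone" by (simp add: xconst_def sone_def)

lemma xconst_gen: "xconst (gen j)" by (simp add: xconst_def gen_def)

lemma xconst_smult: assumes "xconst F" "xconst G" shows "xconst (smult F G)"
  unfolding xconst_def
proof (intro allI)
  fix C x y
  have f: "F A x = F A y" "G A x = G A y" for A using assms unfolding xconst_def by blast+
  show "smult F G C x = smult F G C y" unfolding smult_def by (intro sum.cong refl) (simp add: f)
qed

lemma xconst_theta2: "xconst (theta2 n)" by (simp add: xconst_def theta2_eq)

lemma xconst_spow: "xconst (spow (theta2 n) k)"
  by (induction k) (auto simp: spow_0 spow_Suc xconst_sone xconst_smult xconst_theta2)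

definition coeff_smooth0 :: "'m::finite sfun \<Rightarrow> bool" where "coeff_smooth0 F \<longleftrightarrow> (\<forall>C. smooth0 (F C))"

lemma superfun_coeff_smooth0: "superfun n f \<Longrightarrow> coeff_smooth0 f"
  unfolding superfun_def coeff_smooth0_def by (metis smooth_fun_smooth0 smooth0_const)

abbreviation pcoef :: "nat \<Rightarrow> real" where "pcoef k \<equiv> (-1)^k / fact k"

lemma pcoef_Suc: "pcoef (Suc m) * real (Suc m) = - pcoef m"
proof -
  have "pcoef (Suc m) * real (Suc m) = (-1) * (-1)^m / (real (Suc m) * fact m) * real (Suc m)"
    by (simp only: fact_Suc power_Suc of_nat_mult)
  also have "\<dots> = - pcoef m" by (simp del: of_nat_Suc)
  finally show ?thesis .
qed

lemma phi_eq: "phi n F B = (\<lambda>y. \<Sum>k\<in>{0..n}. pcoef k * smult (spow (theta2 n) k) (\<lambda>C. (dr2f ^^ k) (F C)) B y)"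
  by (rule ext) (simp add: phi_def dr2_pow)

lemma phi_cong:
  assumes "\<And>C. eq0 (F C) (F' C)" "x \<noteq> 0"
  shows "phi n F B x = phi n F' B x"
proof -
  have "(dr2f ^^ k) (F C) x = (dr2f ^^ k) (F' C) x" for k C
    using dr2f_pow_cong[OF assms(1)] assms(2) unfolding eq0_def by blast
  then show ?thesis unfolding phi_eq by (intro sum.cong refl arg_cong2[where f="(*)"] smult_cong_r) auto
qed

lemma phi_lin:
  assumes "\<And>a. a \<in> S \<Longrightarrow> coeff_smooth0 (F a)" "x \<noteq> 0"
  shows "phi n (\<lambda>C y. \<Sum>a\<in>S. c a * F a C y) B x = (\<Sum>a\<in>S. c a * phi n (F a) B x)"
proof -
  have e: "(dr2f ^^ k) (\<lambda>y. \<Sum>a\<in>S. c a * F a C y) x = (\<Sum>a\<in>S. c a * (dr2f ^^ k) (F a C) x)" for k C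
    using dr2f_pow_lin[of S "\<lambda>a. F a C" k c] assms unfolding coeff_smooth0_def eq0_def by blast
  have "phi n (\<lambda>C y. \<Sum>a\<in>S. c a * F a C y) B x = (\<Sum>k\<in>{0..n}. pcoef k * (\<Sum>a\<in>S. c a * smult (spow (theta2 n) k) (\<lambda>C. (dr2f ^^ k) (F a C)) B x))"
    unfolding phi_eq by (intro sum.cong refl arg_cong2[where f="(*)"] smult_sum_r) (simp add: e)
  also have "\<dots> = (\<Sum>a\<in>S. c a * phi n (F a) B x)"
    unfolding phi_eq by (simp add: sum_distrib_left sum.swap[of _ "{0..n}"] algebra_simps)
  finally show ?thesis .
qed

lemma phi_add:
  assumes "coeff_smooth0 F1" "coeff_smooth0 F2" "x \<noteq> 0"
  shows "phi n (\<lambda>C y. F1 C y + F2 C y) B x = phi n F1 B x + phi n F2 B x"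
proof -
  have e: "(\<lambda>C y. F1 C y + F2 C y) = (\<lambda>C y. \<Sum>b\<in>{True,False}. 1 * (if b then F1 else F2) C y)"
    by (intro ext) simp
  show ?thesis unfolding e using assms by (subst phi_lin) auto
qed

lemma pd_phi:
  assumes "coeff_smooth0 F" "x \<noteq> 0"
  shows "pd i (phi n F B) x = (\<Sum>k\<in>{0..n}. pcoef k * smult (spow (theta2 n) k) (\<lambda>C. pd i ((dr2f ^^ k) (F C))) B x)"
proof -
  have g: "smooth0 (smult (spow (theta2 n) k) (\<lambda>C. (dr2f ^^ k) (F C)) B)" for k
    using assms unfolding coeff_smooth0_def by (intro smooth0_smult xconst_spow smooth0_dr2f_pow) auto
  have "pd i (phi n F B) x = (\<Sum>k\<in>{0..n}. pcoef k * pd i (smult (spow (theta2 n) k) (\<lambda>C. (dr2f ^^ k) (F C)) B) x)"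
    unfolding phi_eq using g assms by (intro pd_lin) (auto intro: smooth0_differentiable)
  also have "\<dots> = (\<Sum>k\<in>{0..n}. pcoef k * smult (spow (theta2 n) k) (\<lambda>C. pd i ((dr2f ^^ k) (F C))) B x)"
    using assms unfolding coeff_smooth0_def by (intro sum.cong refl arg_cong2[where f="(*)"] pd_smult xconst_spow smooth0_differentiable smooth0_dr2f_pow) auto
  finally show ?thesis .
qed

lemma dr2f_phi:
  assumes "coeff_smooth0 F" "x \<noteq> 0"
  shows "dr2f (phi n F B) x = phi n (\<lambda>C. dr2f (F C)) B x"
proof -
  have g: "smooth0 (smult (spow (theta2 n) k) (\<lambda>C. (dr2f ^^ k) (F C)) B)" for k
    using assms unfolding coeff_smooth0_def by (intro smooth0_smult xconst_spow smooth0_dr2f_pow) auto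
  have "dr2f (phi n F B) x = (\<Sum>k\<in>{0..n}. pcoef k * dr2f (smult (spow (theta2 n) k) (\<lambda>C. (dr2f ^^ k) (F C)) B) x)"
    unfolding phi_eq using g assms by (intro dr2f_lin) auto
  also have "\<dots> = (\<Sum>k\<in>{0..n}. pcoef k * smult (spow (theta2 n) k) (\<lambda>C. dr2f ((dr2f ^^ k) (F C))) B x)"
    using assms unfolding coeff_smooth0_def by (intro sum.cong refl arg_cong2[where f="(*)"] dr2f_smult xconst_spow smooth0_dr2f_pow) auto
  also have "\<dots> = phi n (\<lambda>C. dr2f (F C)) B x"
    unfolding phi_eq by (simp add: funpow_swap1)
  finally show ?thesis .
qed

lemma ang_phi:
  assumes F: "coeff_smooth0 F" and x: "x \<noteq> 0"
  shows "ang j (phi n F B) x = phi n (\<lambda>C. ang j (F C)) B x"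
proof -
  define G where "G k = (\<lambda>C. (dr2f ^^ k) (F C))" for k
  have o: "ang j (phi n F B) x = norm x * (pd j (phi n F B) x - 2 * x$j * dr2f (phi n F B) x)"
    by (simp add: ang_def)
  have p1: "pd j (phi n F B) x = (\<Sum>k\<in>{0..n}. pcoef k * smult (spow (theta2 n) k) (\<lambda>C. pd j (G k C)) B x)"
    unfolding G_def by (rule pd_phi[OF F x])
  have d1: "dr2f (phi n F B) x = (\<Sum>k\<in>{0..n}. pcoef k * smult (spow (theta2 n) k) (\<lambda>C. dr2f (G k C)) B x)"
  proof -
    have "dr2f (phi n F B) x = phi n (\<lambda>C. dr2f (F C)) B x" by (rule dr2f_phi[OF F x])
    also have "\<dots> = (\<Sum>k\<in>{0..n}. pcoef k * smult (spow (theta2 n) k) (\<lambda>C. dr2f (G k C)) B x)"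
      unfolding phi_eq G_def by (simp add: funpow_swap1)
    finally show ?thesis .
  qed
  have L: "ang j (phi n F B) x = (\<Sum>k\<in>{0..n}. pcoef k * (norm x * (smult (spow (theta2 n) k) (\<lambda>C. pd j (G k C)) B x
       - (2 * x$j) * smult (spow (theta2 n) k) (\<lambda>C. dr2f (G k C)) B x)))"
    unfolding o p1 d1 by (simp add: sum_distrib_left sum_subtractf[symmetric] algebra_simps)
  have R: "phi n (\<lambda>C. ang j (F C)) B x = (\<Sum>k\<in>{0..n}. pcoef k * smult (spow (theta2 n) k) (\<lambda>C. ang j (G k C)) B x)"
    unfolding phi_eq G_def
  proof (intro sum.cong refl arg_cong2[where f="(*)"] smult_cong_r)
    fix k C
    show "(dr2f ^^ k) (ang j (F C)) x = ang j ((dr2f ^^ k) (F C)) x"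
      using dr2f_pow_ang[of "F C" k j] F x unfolding coeff_smooth0_def eq0_def by blast
  qed
  have T: "smult (spow (theta2 n) k) (\<lambda>C. ang j (G k C)) B x = norm x * (smult (spow (theta2 n) k) (\<lambda>C. pd j (G k C)) B x
       - (2 * x$j) * smult (spow (theta2 n) k) (\<lambda>C. dr2f (G k C)) B x)" for k
  proof -
    have "smult (spow (theta2 n) k) (\<lambda>C. ang j (G k C)) B x = norm x * smult (spow (theta2 n) k) (\<lambda>C y. pd j (G k C) y - (2 * x$j) * dr2f (G k C) y) B x"
      by (rule smult_scal_r) (simp add: ang_def)
    also have "smult (spow (theta2 n) k) (\<lambda>C y. pd j (G k C) y - (2 * x$j) * dr2f (G k C) y) B x
       = smult (spow (theta2 n) k) (\<lambda>C. pd j (G k C)) B x - smult (spow (theta2 n) k) (\<lambda>C y. (2 * x$j) * dr2f (G k C) y) B x"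
      by (rule smult_diff_r) simp
    also have "smult (spow (theta2 n) k) (\<lambda>C y. (2 * x$j) * dr2f (G k C) y) B x = (2 * x$j) * smult (spow (theta2 n) k) (\<lambda>C. dr2f (G k C)) B x"
      by (rule smult_scal_r) simp
    finally show ?thesis .
  qed
  show ?thesis unfolding L R T ..
qed

definition binser :: "nat \<Rightarrow> real \<Rightarrow> 'm::finite sfun" where
  "binser n al A x = (\<Sum>k=0..n. (al gchoose k) * (-1)^k / (norm x)^(2*k) * spow (theta2 n) k A x)"

lemma sqrtfac_binser: "sqrtfac n = binser n (1/2)"
  by (intro ext) (simp add: sqrtfac_def binser_def)

lemma isqrtfac_binser: "isqrtfac n = binser n (-1/2)"
  by (intro ext) (simp add: isqrtfac_def binser_def)

lemma binser_diff:
  assumes x: "x \<noteq> 0"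
  shows "binser n (1/2) C x - binser n (-1/2) C x = - (rinv x ^ 2) * smult (theta2 n) (binser n (-1/2)) C x"
proof -
  define coef where "coef a = ((-1/2::real) gchoose a) * (-1)^a / (norm x)^(2*a)" for a
  define P where "P k = spow (theta2 n) k C x" for k
  have g: "((1/2::real) gchoose Suc m) - ((-1/2) gchoose Suc m) = ((-1/2) gchoose m)" for m
    using gbinomial_Suc_Suc[of "-1/2::real" m] by simp
  have R: "smult (theta2 n) (binser n (-1/2)) C x = (\<Sum>a\<in>{0..n}. coef a * P (Suc a))"
  proof -
    have "smult (theta2 n) (binser n (-1/2)) C x = (\<Sum>a\<in>{0..n}. coef a * smult (theta2 n) (spow (theta2 n) a) C x)"
      by (rule smult_sum_r) (simp add: binser_def coef_def)
    then show ?thesis by (simp add: P_def spow_Suc)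
  qed
  have L: "binser n (1/2) C x - binser n (-1/2) C x = (\<Sum>b\<in>{0..n}. (((1/2::real) gchoose b) - ((-1/2) gchoose b)) * (-1)^b / (norm x)^(2*b) * P b)"
    unfolding binser_def P_def by (simp add: sum_subtractf[symmetric] algebra_simps diff_divide_distrib)
  have t: "(((1/2::real) gchoose Suc m) - ((-1/2) gchoose Suc m)) * (-1)^(Suc m) / (norm x)^(2*Suc m) * P (Suc m)
      = - (rinv x ^ 2) * (coef m * P (Suc m))" for m
    unfolding g coef_def using x by (simp add: rinv_def field_simps power_add power2_eq_square)
  have Pz: "P (Suc n) = 0" unfolding P_def by (rule spow_vanish) simp
  show ?thesis
  proof (cases n)
    case 0
    then show ?thesis unfolding L R using Pz by simp
  next
    case (Suc n')
    have "binser n (1/2) C x - binser n (-1/2) C x = (\<Sum>b\<le>Suc n'. (((1/2::real) gchoose b) - ((-1/2) gchoose b)) * (-1)^b / (norm x)^(2*b) * P b)"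
      using L unfolding Suc atLeast0AtMost .
    also have "\<dots> = (\<Sum>m\<le>n'. - (rinv x ^ 2) * (coef m * P (Suc m)))"
      by (subst sum.atMost_Suc_shift, simp only: t, simp)
    also have "\<dots> = - (rinv x ^ 2) * (\<Sum>a\<in>{0..n}. coef a * P (Suc a))"
      using Pz unfolding Suc atLeast0AtMost by (simp add: sum_distrib_left)
    finally show ?thesis unfolding R .
  qed
qed

lemma coef_id:
  assumes x: "x \<noteq> 0"
  shows "pcoef (a+b) * of_nat ((a+b) choose a) * (falling al a * rinv x ^ (2*a) * ux)
       = ux * ((al gchoose a) * (-1)^a / (norm x)^(2*a)) * pcoef b"
proof -
  have bf: "of_nat ((a+b) choose a) = (fact (a+b) :: real) / (fact a * fact b)"
    using binomial_fact[of a "a+b", where 'a=real] by simp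
  have rinv: "rinv x ^ (2*a) = 1 / (norm x)^(2*a)" by (simp add: rinv_def power_one_over)
  show ?thesis unfolding bf rinv falling_gchoose
    by (simp add: power_add field_simps)
qed

lemma phi_mult_expand:
  assumes u: "smooth0 u" "eq0 (dr2f u) (\<lambda>y. al * rinv y ^ 2 * u y)" and g: "coeff_smooth0 g" and x: "x \<noteq> 0"
  shows "phi n (\<lambda>C y. u y * g C y) B x = (\<Sum>(a,b)\<in>{(a,b). a+b \<le> n}.
           pcoef (a+b) * of_nat ((a+b) choose a) * hdr2 al u a x * smult (spow (theta2 n) (a+b)) (\<lambda>C. (dr2f ^^ b) (g C)) B x)"
proof -
  define W where "W k b = smult (spow (theta2 n) k) (\<lambda>C. (dr2f ^^ b) (g C)) B x" for k b
  define F where "F a b = pcoef (a+b) * of_nat ((a+b) choose a) * hdr2 al u a x * W (a+b) b" for a b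
  have "phi n (\<lambda>C y. u y * g C y) B x = (\<Sum>k\<in>{..n}. \<Sum>a\<in>{..k}. F a (k - a))"
    unfolding phi_eq atLeast0AtMost
  proof (intro sum.cong refl)
    fix k assume k: "k \<in> {..n}"
    have e: "(dr2f^^k) (\<lambda>y. u y * g C y) x = (\<Sum>a\<in>{..k}. (of_nat (k choose a) * hdr2 al u a x) * (dr2f^^(k-a)) (g C) x)" for C
      using leibniz[OF u, of "g C" k] g x by (simp add: eq0_def coeff_smooth0_def mult.assoc)
    have "smult (spow (theta2 n) k) (\<lambda>C. (dr2f^^k) (\<lambda>y. u y * g C y)) B x
        = (\<Sum>a\<in>{..k}. (of_nat (k choose a) * hdr2 al u a x) * W k (k-a))"
      unfolding W_def by (rule smult_sum_r) (rule e)
    also have "pcoef k * \<dots> = (\<Sum>a\<in>{..k}. F a (k-a))"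
      unfolding F_def sum_distrib_left by (intro sum.cong refl) (auto simp: algebra_simps)
    finally show "pcoef k * smult (spow (theta2 n) k) (\<lambda>C. (dr2f^^k) (\<lambda>y. u y * g C y)) B x = (\<Sum>a\<in>{..k}. F a (k-a))" .
  qed
  also have "\<dots> = (\<Sum>(a,b)\<in>{(a,b). a+b \<le> n}. F a b)"
    by (rule sum.triangle_reindex_eq[symmetric])
  finally show ?thesis unfolding F_def W_def .
qed

lemma spow_phi:
  "smult (spow (theta2 n) a) (phi n g) B x
     = (\<Sum>b\<in>{0..n}. pcoef b * smult (spow (theta2 n) (a+b)) (\<lambda>C. (dr2f ^^ b) (g C)) B x)"
proof -
  have "smult (spow (theta2 n) a) (smult (spow (theta2 n) b) (\<lambda>C. (dr2f ^^ b) (g C))) B x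
      = smult (spow (theta2 n) (a+b)) (\<lambda>C. (dr2f ^^ b) (g C)) B x" for b
    by (simp add: smult_assoc[symmetric] smult_cong_l[OF spow_add])
  moreover have "smult (spow (theta2 n) a) (phi n g) B x = (\<Sum>b\<in>{0..n}. pcoef b *
      smult (spow (theta2 n) a) (smult (spow (theta2 n) b) (\<lambda>C. (dr2f ^^ b) (g C))) B x)"
    by (rule smult_sum_r) (simp add: phi_eq)
  ultimately show ?thesis by simp
qed

lemma phi_mult:
  assumes u: "smooth0 u" "eq0 (dr2f u) (\<lambda>y. al * rinv y ^ 2 * u y)" and g: "coeff_smooth0 g" and x: "x \<noteq> 0"
  shows "phi n (\<lambda>C y. u y * g C y) B x = u x * smult (binser n al) (phi n g) B x"
proof -
  define W where "W k b = smult (spow (theta2 n) k) (\<lambda>C. (dr2f ^^ b) (g C)) B x" for k b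
  define F where "F a b = pcoef (a+b) * of_nat ((a+b) choose a) * hdr2 al u a x * W (a+b) b" for a b
  define coef where "coef a = (al gchoose a) * (-1)^a / (norm x)^(2*a)" for a
  have L: "phi n (\<lambda>C y. u y * g C y) B x = (\<Sum>(a,b)\<in>{(a,b). a+b \<le> n}. F a b)"
    unfolding F_def W_def by (rule phi_mult_expand[OF u g x])
  have R1: "smult (binser n al) (phi n g) B x = (\<Sum>a\<in>{0..n}. coef a * smult (spow (theta2 n) a) (phi n g) B x)"
    by (rule smult_sum_l) (simp add: binser_def coef_def)
  have R2: "smult (spow (theta2 n) a) (phi n g) B x = (\<Sum>b\<in>{0..n}. pcoef b * W (a+b) b)" for a
    unfolding W_def by (rule spow_phi)
  have Wz: "n < a+b \<Longrightarrow> W (a+b) b = 0" for a b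
    unfolding W_def by (rule smult_zero_l) (simp add: spow_vanish)
  have "u x * smult (binser n al) (phi n g) B x = (\<Sum>(a,b)\<in>{..n}\<times>{..n}. u x * coef a * pcoef b * W (a+b) b)"
    unfolding R1 R2 atLeast0AtMost sum.cartesian_product[symmetric]
    by (simp add: sum_distrib_left mult.assoc)
  also have "\<dots> = (\<Sum>(a,b)\<in>{(a,b). a+b \<le> n}. u x * coef a * pcoef b * W (a+b) b)"
  proof (rule sum.mono_neutral_right)
    show "\<forall>i\<in>{..n} \<times> {..n} - {(a, b). a + b \<le> n}. (case i of (a, b) \<Rightarrow> u x * coef a * pcoef b * W (a + b) b) = 0"
    proof (intro ballI)
      fix i assume i: "i \<in> {..n} \<times> {..n} - {(a, b). a + b \<le> n}"
      obtain a b where ab: "i = (a,b)" by (cases i)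
      then have "W (a+b) b = 0" using i by (intro Wz) auto
      then show "(case i of (a, b) \<Rightarrow> u x * coef a * pcoef b * W (a + b) b) = 0" using ab by simp
    qed
  qed auto
  also have "\<dots> = (\<Sum>(a,b)\<in>{(a,b). a+b \<le> n}. F a b)"
  proof (intro sum.cong refl, clarify)
    fix a b
    show "u x * coef a * pcoef b * W (a+b) b = F a b"
      unfolding F_def hdr2_def coef_def using coef_id[OF x, of a b al "u x"] by simp
  qed
  finally show ?thesis using L by simp
qed

(* Multiplication by x_j: u = x_j is homogeneous with alpha = 1/2. *)
lemma phi_sxmul:
  assumes f: "coeff_smooth0 f" and x: "x \<noteq> 0"
  shows "phi n (sxmul j f) A x = x$j * smult (sqrtfac n) (phi n f) A x"
proof -
  have e: "sxmul j f = (\<lambda>C y. (\<lambda>y. y$j) y * f C y)" by (intro ext) (simp add: sxmul_def)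
  have d: "eq0 (dr2f (\<lambda>y. y$j)) (\<lambda>y. (1/2) * rinv y ^ 2 * y$j)"
    by (simp add: eq0_def dr2f_coord)
  show ?thesis unfolding e sqrtfac_binser
    using phi_mult[OF smooth0_coord d f x] by simp
qed

(* Multiplication by x`_j: x`_j commutes with the even theta^{2k}. *)
lemma phi_gen:
  assumes f: "coeff_smooth0 f" and x: "x \<noteq> 0"
  shows "phi n (smult (gen j) f) A x = smult (gen j) (phi n f) A x"
proof -
  have "phi n (smult (gen j) f) A x = (\<Sum>k\<in>{0..n}. pcoef k * smult (gen j) (smult (spow (theta2 n) k) (\<lambda>C. (dr2f ^^ k) (f C))) A x)"
    unfolding phi_eq
  proof (intro sum.cong refl arg_cong2[where f="(*)"])
    fix k
    have "smult (spow (theta2 n) k) (\<lambda>C. (dr2f ^^ k) (smult (gen j) f C)) A x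
        = smult (spow (theta2 n) k) (smult (gen j) (\<lambda>C. (dr2f ^^ k) (f C))) A x"
      using dr2f_pow_smult[OF xconst_gen, of f k] f x unfolding coeff_smooth0_def eq0_def
      by (intro smult_cong_r) auto
    also have "\<dots> = smult (smult (spow (theta2 n) k) (gen j)) (\<lambda>C. (dr2f ^^ k) (f C)) A x"
      by (rule smult_assoc[symmetric])
    also have "\<dots> = smult (smult (gen j) (spow (theta2 n) k)) (\<lambda>C. (dr2f ^^ k) (f C)) A x"
      by (intro smult_cong_l smult_comm[OF graded_theta2_pow]) simp
    also have "\<dots> = smult (gen j) (smult (spow (theta2 n) k) (\<lambda>C. (dr2f ^^ k) (f C))) A x"
      by (rule smult_assoc)
    finally show "smult (spow (theta2 n) k) (\<lambda>C. (dr2f ^^ k) (smult (gen j) f C)) A x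
        = smult (gen j) (smult (spow (theta2 n) k) (\<lambda>C. (dr2f ^^ k) (f C))) A x" .
  qed
  also have "\<dots> = smult (gen j) (phi n f) A x"
    by (rule smult_sum_r[symmetric]) (simp add: phi_eq)
  finally show ?thesis .
qed

(* The odd derivative only relabels coefficients, so it commutes with d/dr^2. *)
lemma dr2f_pow_oder:
  assumes f: "coeff_smooth0 f" and x: "x \<noteq> 0"
  shows "(dr2f ^^ k) (oder j f C) x = oder j (\<lambda>C. (dr2f ^^ k) (f C)) C x"
proof (cases "j \<in> C")
  case True
  then have "oder j f C = (\<lambda>y. 0)" by (intro ext) (simp add: oder_eq)
  then show ?thesis using True by (simp add: dr2f_pow_zero oder_eq)
next
  case False
  then have "oder j f C = (\<lambda>y. (-1)^nbelow C j * f (insert j C) y)" by (intro ext) (simp add: oder_eq)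
  then show ?thesis using False dr2f_pow_scal[of "f (insert j C)" k "(-1)^nbelow C j"] f x
    by (simp add: oder_eq coeff_smooth0_def eq0_def)
qed

lemma oder_spow_reindex:
  fixes H :: "nat \<Rightarrow> 'm::finite sfun" and B :: "nat set" and x :: "real^'m"
  assumes j: "j \<in> {1..2*n}"
  defines "X m \<equiv> smult (smult (gup j) (spow (theta2 n) m)) (H (Suc m)) B x"
  shows "(\<Sum>k\<in>{0..n}. pcoef k * smult (oder j (spow (theta2 n) k)) (H k) B x) = 2 * (\<Sum>k\<in>{0..n}. pcoef k * X k)"
proof -
  have Xn: "X n = 0" unfolding X_def by (rule smult_zero_l) (rule gup_spow_n[OF j])
  have h: "pcoef k * smult (oder j (spow (theta2 n) k)) (H k) B x = (if k = 0 then 0 else 2 * pcoef (k - 1) * X (k - 1))" for k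
  proof (cases k)
    case 0 then show ?thesis by (simp add: oder_spow_gen[OF j] smult_zero_l)
  next
    case (Suc m)
    have "smult (oder j (spow (theta2 n) (Suc m))) (H (Suc m)) B x = real (Suc m) * (-2) * X m"
      unfolding X_def by (rule smult_scal_l) (simp add: oder_spow_gen[OF j])
    then have "pcoef (Suc m) * smult (oder j (spow (theta2 n) (Suc m))) (H (Suc m)) B x = (pcoef (Suc m) * real (Suc m)) * (-2) * X m"
      by (simp only: mult.assoc)
    also have "\<dots> = 2 * pcoef m * X m" by (simp only: pcoef_Suc) simp
    finally show ?thesis using Suc by simp
  qed
  show ?thesis
  proof (cases n)
    case 0 then show ?thesis using Xn h[of 0] by simp
  next
    case (Suc n')
    have "(\<Sum>k\<in>{0..n}. pcoef k * smult (oder j (spow (theta2 n) k)) (H k) B x) = (\<Sum>k\<in>{0..n}. (if k = 0 then 0 else 2 * pcoef (k - 1) * X (k - 1)))"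
      by (rule sum.cong[OF refl h])
    also have "\<dots> = (\<Sum>k\<le>Suc n'. (if k = 0 then 0 else 2 * pcoef (k - 1) * X (k - 1)))"
      unfolding Suc atLeast0AtMost ..
    also have "\<dots> = (\<Sum>m\<le>n'. 2 * pcoef m * X m)" by (subst sum.atMost_Suc_shift) simp
    also have "\<dots> = 2 * (\<Sum>k\<in>{0..n}. pcoef k * X k)"
      using Xn Suc by (simp add: atLeast0AtMost sum_distrib_left mult.assoc)
    finally show ?thesis .
  qed
qed

lemma phi_oder:
  assumes f: "coeff_smooth0 f" and x: "x \<noteq> 0" and j: "j \<in> {1..2*n}"
  shows "phi n (oder j f) B x = oder j (phi n f) B x - 1 / norm x * smult (gup j) (dr (phi n f)) B x"
proof -
  define H where "H k = (\<lambda>C. (dr2f ^^ k) (f C))" for k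
  define X where "X m = smult (smult (gup j) (spow (theta2 n) m)) (H (Suc m)) B x" for m
  have step: "smult (spow (theta2 n) k) (H' k) B x = oder j (smult (spow (theta2 n) k) (H k)) B x - smult (oder j (spow (theta2 n) k)) (H k) B x"
    if "\<And>C. H' k C x = oder j (H k) C x" for k H'
  proof -
    have "smult (spow (theta2 n) k) (H' k) B x = smult (spow (theta2 n) k) (oder j (H k)) B x"
      using that by (rule smult_cong_r)
    moreover have "oder j (smult (spow (theta2 n) k) (H k)) B x = smult (oder j (spow (theta2 n) k)) (H k) B x + smult (spow (theta2 n) k) (oder j (H k)) B x"
      by (rule oder_smult[OF graded_theta2_pow]) simp
    ultimately show ?thesis by simp
  qed
  have L: "phi n (oder j f) B x = (\<Sum>k\<in>{0..n}. pcoef k * oder j (smult (spow (theta2 n) k) (H k)) B x)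
        - (\<Sum>k\<in>{0..n}. pcoef k * smult (oder j (spow (theta2 n) k)) (H k) B x)"
    unfolding phi_eq sum_subtractf[symmetric] right_diff_distrib[symmetric]
    by (intro sum.cong refl arg_cong2[where f="(*)"] step) (simp add: H_def dr2f_pow_oder[OF f x])
  have O: "oder j (phi n f) B x = (\<Sum>k\<in>{0..n}. pcoef k * oder j (smult (spow (theta2 n) k) (H k)) B x)"
    unfolding phi_eq H_def by (cases "j \<in> B") (simp_all add: oder_eq sum_distrib_left algebra_simps)
  have D: "dr (phi n f) C x = 2 * norm x * (\<Sum>k\<in>{0..n}. pcoef k * smult (spow (theta2 n) k) (H (Suc k)) C x)" for C
  proof -
    have "dr (phi n f) C x = 2 * norm x * dr2f (phi n f C) x" using x by (simp add: dr_eq_dr2f)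
    also have "dr2f (phi n f C) x = phi n (\<lambda>C. dr2f (f C)) C x" using f x by (rule dr2f_phi)
    also have "\<dots> = (\<Sum>k\<in>{0..n}. pcoef k * smult (spow (theta2 n) k) (H (Suc k)) C x)"
      unfolding phi_eq H_def by (simp add: funpow_swap1)
    finally show ?thesis .
  qed
  have R: "1 / norm x * smult (gup j) (dr (phi n f)) B x = 2 * (\<Sum>k\<in>{0..n}. pcoef k * X k)"
  proof -
    have "smult (gup j) (dr (phi n f)) B x = 2 * norm x * smult (gup j) (\<lambda>C y. \<Sum>k\<in>{0..n}. pcoef k * smult (spow (theta2 n) k) (H (Suc k)) C y) B x"
      by (rule smult_scal_r) (rule D)
    also have "smult (gup j) (\<lambda>C y. \<Sum>k\<in>{0..n}. pcoef k * smult (spow (theta2 n) k) (H (Suc k)) C y) B x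
        = (\<Sum>k\<in>{0..n}. pcoef k * smult (gup j) (smult (spow (theta2 n) k) (H (Suc k))) B x)"
      by (rule smult_sum_r) simp
    also have "\<dots> = (\<Sum>k\<in>{0..n}. pcoef k * X k)"
      unfolding X_def by (simp add: smult_assoc)
    finally show ?thesis using x by simp
  qed
  have T: "(\<Sum>k\<in>{0..n}. pcoef k * smult (oder j (spow (theta2 n) k)) (H k) B x) = 2 * (\<Sum>k\<in>{0..n}. pcoef k * X k)"
    unfolding X_def by (rule oder_spow_reindex[OF j])
  show ?thesis using L O R T by simp
qed

lemma phi_epd_split:
  fixes f :: "'m::finite sfun"
  assumes f: "coeff_smooth0 f" and x: "x \<noteq> 0"
  shows "phi n (epd j f) A x = 2 * x$j * smult (binser n (1/2)) (phi n (\<lambda>C. dr2f (f C))) A x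
           + rinv x * smult (binser n (-1/2)) (phi n (\<lambda>C. ang j (f C))) A x"
proof -
  have sD: "coeff_smooth0 (\<lambda>C. dr2f (f C))" "coeff_smooth0 (\<lambda>C. ang j (f C))"
    using f unfolding coeff_smooth0_def by (auto intro: smooth0_dr2f smooth0_ang)
  have sA: "coeff_smooth0 (\<lambda>C y. (2 * y$j) * dr2f (f C) y)"
    using sD(1) unfolding coeff_smooth0_def by (auto intro!: smooth0_mult smooth0_scal smooth0_coord)
  have sB: "coeff_smooth0 (\<lambda>C y. rinv y * ang j (f C) y)"
    using sD(2) unfolding coeff_smooth0_def by (auto intro!: smooth0_mult smooth0_rinv)
  have split: "eq0 (epd j f C) (\<lambda>y. (2 * y$j) * dr2f (f C) y + rinv y * ang j (f C) y)" for C
    unfolding eq0_def epd_def by (simp add: pd_radial_angular)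
  have dx: "eq0 (dr2f (\<lambda>y. 2 * y$j)) (\<lambda>y. (1/2) * rinv y ^ 2 * (2 * y$j))"
    unfolding eq0_def by (simp add: dr2f_cmult smooth0_coord dr2f_coord)
  have dr: "eq0 (dr2f rinv) (\<lambda>y. (-1/2) * rinv y ^ 2 * rinv y)"
    unfolding eq0_def by (simp add: dr2f_rinv)
  show ?thesis
    using phi_cong[OF split x, where n=n and B=A] phi_add[OF sA sB x, where n=n and B=A]
      phi_mult[OF smooth0_scal[OF smooth0_coord] dx sD(1) x, where n=n and B=A]
      phi_mult[OF smooth0_rinv dr sD(2) x, where n=n and B=A]
    by simp
qed

(* Even derivative: combine with Omega_j phi = phi Omega_j and the binomial difference. *)
lemma phi_epd:
  fixes f :: "'m::finite sfun"
  assumes f: "coeff_smooth0 f" and x: "x \<noteq> 0"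
  shows "phi n (epd j f) A x = smult (isqrtfac n) (epd j (phi n f)) A x
          - x$j / (norm x)^3 * smult (smult (theta2 n) (isqrtfac n)) (dr (phi n f)) A x"
proof -
  define Y where "Y = phi n (\<lambda>C. dr2f (f C))"
  define Z where "Z = epd j (phi n f)"
  define Sm where "Sm = (binser n (-1/2) :: 'm sfun)"
  define Sp where "Sp = (binser n (1/2) :: 'm sfun)"
  have YC: "dr2f (phi n f C) x = Y C x" for C unfolding Y_def by (rule dr2f_phi[OF f x])
  have ang: "smult Sm (phi n (\<lambda>C. ang j (f C))) A x = norm x * (smult Sm Z A x - (2 * x$j) * smult Sm Y A x)"
  proof -
    have "smult Sm (phi n (\<lambda>C. ang j (f C))) A x = norm x * smult Sm (\<lambda>C y. Z C y - (2 * x$j) * Y C y) A x"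
    proof (rule smult_scal_r)
      fix C
      have "phi n (\<lambda>C. ang j (f C)) C x = ang j (phi n f C) x" by (rule ang_phi[OF f x, symmetric])
      then show "phi n (\<lambda>C. ang j (f C)) C x = norm x * (Z C x - (2 * x$j) * Y C x)"
        unfolding ang_def Z_def epd_def YC by simp
    qed
    also have "smult Sm (\<lambda>C y. Z C y - (2 * x$j) * Y C y) A x = smult Sm Z A x - (2 * x$j) * smult Sm Y A x"
      by (simp add: smult_diff_r smult_scal_r)
    finally show ?thesis .
  qed
  have radial: "smult (smult (theta2 n) Sm) (dr (phi n f)) A x = (2 * norm x) * smult (smult (theta2 n) Sm) Y A x"
    by (rule smult_scal_r) (simp add: dr_eq_dr2f[OF x] YC)
  have binom: "smult Sp Y A x - smult Sm Y A x = - (rinv x ^ 2) * smult (smult (theta2 n) Sm) Y A x"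
  proof -
    have "smult Sp Y A x - smult Sm Y A x = smult (\<lambda>C y. Sp C y - Sm C y) Y A x"
      by (rule smult_diff_l[symmetric])
    also have "\<dots> = - (rinv x ^ 2) * smult (smult (theta2 n) Sm) Y A x"
      by (rule smult_scal_l) (unfold Sp_def Sm_def, rule binser_diff[OF x])
    finally show ?thesis .
  qed
  have "phi n (epd j f) A x
      = 2 * x$j * smult Sp Y A x + rinv x * (norm x * (smult Sm Z A x - (2 * x$j) * smult Sm Y A x))"
    using phi_epd_split[OF f x, of n j A] ang unfolding Y_def Sp_def Sm_def by simp
  also have "\<dots> = smult Sm Z A x + 2 * x$j * (smult Sp Y A x - smult Sm Y A x)"
    using x by (simp add: rinv_def algebra_simps)
  also have "\<dots> = smult Sm Z A x - x$j / (norm x)^3 * ((2 * norm x) * smult (smult (theta2 n) Sm) Y A x)"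
    unfolding binom using x by (simp add: rinv_def field_simps power2_eq_square power3_eq_cube)
  finally show ?thesis using radial unfolding Sm_def Z_def isqrtfac_binser by simp
qed

theorem lemma5p4:
  fixes n :: nat and f :: "'m::finite sfun"
  assumes "superfun n f"
  shows "(\<forall>j::'m. \<forall>A x. x \<noteq> 0 \<longrightarrow>
            phi n (sxmul j f) A x = x$j * smult (sqrtfac n) (phi n f) A x)
       \<and> (\<forall>j\<in>{1..2*n}. \<forall>A x. x \<noteq> 0 \<longrightarrow>
            phi n (smult (gen j) f) A x = smult (gen j) (phi n f) A x)
       \<and> (\<forall>j::'m. \<forall>A x. x \<noteq> 0 \<longrightarrow>
            phi n (epd j f) A x =
              smult (isqrtfac n) (epd j (phi n f)) A x
              - x$j / (norm x)^3 * smult (smult (theta2 n) (isqrtfac n)) (dr (phi n f)) A x)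
       \<and> (\<forall>j\<in>{1..2*n}. \<forall>A x. x \<noteq> 0 \<longrightarrow>
            phi n (oder j f) A x =
              oder j (phi n f) A x - 1 / norm x * smult (gup j) (dr (phi n f)) A x)"
proof -
  have f: "coeff_smooth0 f" using assms by (rule superfun_coeff_smooth0)
  show ?thesis using phi_sxmul[OF f] phi_gen[OF f] phi_epd[OF f] phi_oder[OF f] by blast
qed

end
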